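(* For every finite pure-state ensemble $\mathcal{E}$ and $\epsilon$, the function $R\mapsto M_\epsilon(\mathcal{E},R)$ is monotonically nonincreasing. Moreover, $M_\epsilon(\mathcal{E},R)$ is jointly convex in $(\epsilon,R)$ in the following sense. For any finitely many $\epsilon_k>0$, $R_k\ge 0$ and probabilities $\lambda_k\ge 0$ with $\sum_k\lambda_k=1$, setting $\epsilon=\sum_k\lambda_k\epsilon_k$ and $R=\sum_k\lambda_kR_k$, we have $M_\epsilon(\mathcal{E},R)\le\sum_k\lambda_kM_{\epsilon_k}(\mathcal{E},R_k)$.
   Context: Let $\mathcal{E}=\{|\varphi_x\rangle,r_x\}_{x\in\mathcal X}$ be a finite ensemble of pure states on a finite-dimensional Hilbert space $\mathcal H$. An encoding map $E$ assigns to each $x$ a state $E(x)=\sum_jp(j|x)\,\omega_{x,j}\otimes|j\rangle\langle j|$ on $\mathcal H_B\otimes\mathcal H_C$. Here $\mathcal H_B,\mathcal H_C$ are finite-dimensional and $\{|j\rangle\}$ is an orthonormal basis of $\mathcal H_C$. With $\rho^{ABC}=\sum_xr_x|x\rangle\langle x|^A\otimes E(x)$, define $S(A:C)=S(A)+S(C)-S(AC)$ and $S(A:B|C)=S(AC)+S(BC)-S(ABC)-S(C)$, where $S$ is von Neumann entropy (base 2) of reduced states. $T_\epsilon(\mathcal{E},R)$ is the set of encoding maps $E$ with $S(A:C)\le R$ for which there exists a CPTP map $D$ from operators on $\mathcal H_B\otimes\mathcal H_C$ to operators on $\mathcal H$ with $\sum_xr_x\langle\varphi_x|D(E(x))|\varphi_x\rangle\ge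 1-\epsilon$. $M_\epsilon(\mathcal{E},R)=\inf\{S(A:B|C):E\in T_\epsilon(\mathcal{E},R)\}$. *)

theory Defs
  imports "Jordan_Normal_Form.Char_Poly" "HOL-Library.Extended_Real"
begin

definition mtrace :: "complex mat \<Rightarrow> complex" where
  "mtrace A = (\<Sum>i<dim_row A. A $$ (i, i))"

definition qform :: "complex mat \<Rightarrow> complex vec \<Rightarrow> complex" where
  "qform A v = (\<Sum>i<dim_vec v. \<Sum>j<dim_vec v. cnj (v $ i) * A $$ (i, j) * v $ j)"

definition psd :: "complex mat \<Rightarrow> bool" where
  "psd A \<longleftrightarrow> dim_col A = dim_row A \<and>
     (\<forall>v \<in> carrier_vec (dim_row A). Im (qform A v) = 0 \<and> Re (qform A v) \<ge> 0)"

definition density :: "nat \<Rightarrow> complex mat \<Rightarrow> bool" where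
  "density n \<rho> \<longleftrightarrow> \<rho> \<in> carrier_mat n n \<and> psd \<rho> \<and> mtrace \<rho> = 1"

definition kron :: "complex mat \<Rightarrow> complex mat \<Rightarrow> complex mat" where
  "kron A B = mat (dim_row A * dim_row B) (dim_col A * dim_col B)
     (\<lambda>(i, j). A $$ (i div dim_row B, j div dim_col B) * B $$ (i mod dim_row B, j mod dim_col B))"

definition proj :: "nat \<Rightarrow> nat \<Rightarrow> complex mat" where
  "proj n j = mat n n (\<lambda>(a, b). if a = j \<and> b = j then 1 else 0)"

definition msum :: "nat \<Rightarrow> nat \<Rightarrow> ('i \<Rightarrow> complex mat) \<Rightarrow> 'i set \<Rightarrow> complex mat" where
  "msum n m f I = mat n m (\<lambda>ij. \<Sum>k\<in>I. f k $$ ij)"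

definition ptrace2 :: "nat \<Rightarrow> nat \<Rightarrow> complex mat \<Rightarrow> complex mat" where
  "ptrace2 a b \<rho> = mat a a (\<lambda>(i, j). \<Sum>k<b. \<rho> $$ (i * b + k, j * b + k))"

definition ptrace1 :: "nat \<Rightarrow> nat \<Rightarrow> complex mat \<Rightarrow> complex mat" where
  "ptrace1 a b \<rho> = mat b b (\<lambda>(i, j). \<Sum>k<a. \<rho> $$ (k * b + i, k * b + j))"

definition ptrace_mid :: "nat \<Rightarrow> nat \<Rightarrow> nat \<Rightarrow> complex mat \<Rightarrow> complex mat" where
  "ptrace_mid a b c \<rho> = mat (a * c) (a * c) (\<lambda>(i, j).
     \<Sum>k<b. \<rho> $$ ((i div c) * (b * c) + k * c + i mod c, (j div c) * (b * c) + k * c + j mod c))"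

definition eta :: "real \<Rightarrow> real" where
  "eta t = (if t > 0 then t * log 2 t else 0)"

text \<open>S(rho) = - sum over eigenvalues (with algebraic multiplicity, i.e. roots of the
  characteristic polynomial) of lambda log2 lambda\<close>
definition vn_entropy :: "complex mat \<Rightarrow> real" where
  "vn_entropy \<rho> = - (\<Sum>z\<in>{z. poly (char_poly \<rho>) z = 0}.
      real (order z (char_poly \<rho>)) * eta (Re z))"

text \<open>(id_k (x) D) applied to a (k*n) x (k*n) matrix, block-wise\<close>
definition ampliate :: "nat \<Rightarrow> nat \<Rightarrow> nat \<Rightarrow> (complex mat \<Rightarrow> complex mat) \<Rightarrow> complex mat \<Rightarrow> complex mat" where
  "ampliate k n m D X = mat (k * m) (k * m) (\<lambda>(i, j).
     D (mat n n (\<lambda>(p, q). X $$ ((i div m) * n + p, (j div m) * n + q))) $$ (i mod m, j mod m))"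

definition cptp :: "nat \<Rightarrow> nat \<Rightarrow> (complex mat \<Rightarrow> complex mat) \<Rightarrow> bool" where
  "cptp n m D \<longleftrightarrow>
     (\<forall>A \<in> carrier_mat n n. D A \<in> carrier_mat m m) \<and>
     (\<forall>A \<in> carrier_mat n n. \<forall>B \<in> carrier_mat n n. D (A + B) = D A + D B) \<and>
     (\<forall>A \<in> carrier_mat n n. \<forall>c. D (c \<cdot>\<^sub>m A) = c \<cdot>\<^sub>m D A) \<and>
     (\<forall>A \<in> carrier_mat n n. mtrace (D A) = mtrace A) \<and>
     (\<forall>k. \<forall>X \<in> carrier_mat (k * n) (k * n). psd X \<longrightarrow> psd (ampliate k n m D X))"

definition ensemble :: "nat \<Rightarrow> nat \<Rightarrow> (nat \<Rightarrow> real) \<Rightarrow> (nat \<Rightarrow> complex vec) \<Rightarrow> bool" where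
  "ensemble d n r \<phi> \<longleftrightarrow>
     (\<forall>x<n. r x \<ge> 0 \<and> \<phi> x \<in> carrier_vec d \<and> (\<Sum>i<d. (cmod (\<phi> x $ i))\<^sup>2) = 1) \<and>
     (\<Sum>x<n. r x) = 1"

text \<open>An encoding: H_B = C^dB, H_C = C^dC, conditional distribution p x j (j < dC),
  states omega x j on H_B.\<close>
record encoding =
  dimB :: nat
  dimC :: nat
  pcond :: "nat \<Rightarrow> nat \<Rightarrow> real"
  omega :: "nat \<Rightarrow> nat \<Rightarrow> complex mat"

definition valid_encoding :: "nat \<Rightarrow> encoding \<Rightarrow> bool" where
  "valid_encoding n e \<longleftrightarrow>
     (\<forall>x<n. (\<forall>j<dimC e. pcond e x j \<ge> 0 \<and> density (dimB e) (omega e x j)) \<and>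
            (\<Sum>j<dimC e. pcond e x j) = 1)"

definition enc_state :: "encoding \<Rightarrow> nat \<Rightarrow> complex mat" where
  "enc_state e x = msum (dimB e * dimC e) (dimB e * dimC e)
     (\<lambda>j. complex_of_real (pcond e x j) \<cdot>\<^sub>m kron (omega e x j) (proj (dimC e) j)) {..<dimC e}"

definition rhoABC :: "nat \<Rightarrow> (nat \<Rightarrow> real) \<Rightarrow> encoding \<Rightarrow> complex mat" where
  "rhoABC n r e = msum (n * (dimB e * dimC e)) (n * (dimB e * dimC e))
     (\<lambda>x. complex_of_real (r x) \<cdot>\<^sub>m kron (proj n x) (enc_state e x)) {..<n}"

definition S_A :: "nat \<Rightarrow> (nat \<Rightarrow> real) \<Rightarrow> encoding \<Rightarrow> real" where
  "S_A n r e = vn_entropy (ptrace2 n (dimB e * dimC e) (rhoABC n r e))"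
definition S_C :: "nat \<Rightarrow> (nat \<Rightarrow> real) \<Rightarrow> encoding \<Rightarrow> real" where
  "S_C n r e = vn_entropy (ptrace1 (n * dimB e) (dimC e) (rhoABC n r e))"
definition S_AC :: "nat \<Rightarrow> (nat \<Rightarrow> real) \<Rightarrow> encoding \<Rightarrow> real" where
  "S_AC n r e = vn_entropy (ptrace_mid n (dimB e) (dimC e) (rhoABC n r e))"
definition S_BC :: "nat \<Rightarrow> (nat \<Rightarrow> real) \<Rightarrow> encoding \<Rightarrow> real" where
  "S_BC n r e = vn_entropy (ptrace1 n (dimB e * dimC e) (rhoABC n r e))"
definition S_ABC :: "nat \<Rightarrow> (nat \<Rightarrow> real) \<Rightarrow> encoding \<Rightarrow> real" where
  "S_ABC n r e = vn_entropy (rhoABC n r e)"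

definition mutual_AC :: "nat \<Rightarrow> (nat \<Rightarrow> real) \<Rightarrow> encoding \<Rightarrow> real" where
  "mutual_AC n r e = S_A n r e + S_C n r e - S_AC n r e"

definition cmi_AB_C :: "nat \<Rightarrow> (nat \<Rightarrow> real) \<Rightarrow> encoding \<Rightarrow> real" where
  "cmi_AB_C n r e = S_AC n r e + S_BC n r e - S_ABC n r e - S_C n r e"

definition T_eps :: "nat \<Rightarrow> nat \<Rightarrow> (nat \<Rightarrow> real) \<Rightarrow> (nat \<Rightarrow> complex vec) \<Rightarrow> real \<Rightarrow> real \<Rightarrow> encoding set" where
  "T_eps d n r \<phi> \<epsilon> R = {e. valid_encoding n e \<and> mutual_AC n r e \<le> R \<and>
     (\<exists>D. cptp (dimB e * dimC e) d D \<and>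
          (\<Sum>x<n. r x * Re (qform (D (enc_state e x)) (\<phi> x))) \<ge> 1 - \<epsilon>)}"

text \<open>M_eps(E,R) = inf of S(A:B|C) over T_eps(E,R) (infimum of the empty set is +infinity)\<close>
definition M_eps :: "nat \<Rightarrow> nat \<Rightarrow> (nat \<Rightarrow> real) \<Rightarrow> (nat \<Rightarrow> complex vec) \<Rightarrow> real \<Rightarrow> real \<Rightarrow> ereal" where
  "M_eps d n r \<phi> \<epsilon> R = (INF e \<in> T_eps d n r \<phi> \<epsilon> R. ereal (cmi_AB_C n r e))"

end

theory Submission
  imports Defs "Jordan_Normal_Form.Schur_Decomposition"
begin

text \<open>
  Monotonicity in \<open>R\<close> holds because \<open>T\<^sub>\<epsilon>(\<E>, R)\<close> grows with \<open>R\<close>. For convexity, take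
  encodings \<open>E\<^sub>k \<in> T\<^sub>\<epsilon>\<^sub>k(\<E>, R\<^sub>k)\<close> and form the mixture that records \<open>k\<close> in the classical
  register: \<open>E(x) = \<Sum>\<^sub>k \<lambda>\<^sub>k E\<^sub>k(x) \<otimes> |k\<rangle>\<langle>k|\<^sub>C\<close>. Since \<open>k\<close> is independent of \<open>x\<close>, every entropy
  in \<open>S(A:C)\<close> and \<open>S(A:B|C)\<close> of the mixture is the \<open>\<lambda>\<close>-average of the corresponding entropies
  plus the same Shannon term \<open>H(\<lambda>)\<close>, which cancels; so both quantities are affine in the
  mixture. The decoder that applies \<open>D\<^sub>k\<close> to block \<open>k\<close> is CPTP and its success probability is
  the \<open>\<lambda>\<close>-average of those of the \<open>D\<^sub>k\<close>. Choosing each \<open>E\<^sub>k\<close> nearly optimal gives the bound.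

  All entropies are computed from the fact that the reduced states of \<open>\<rho>\<^sup>A\<^sup>B\<^sup>C\<close> are, up to a
  permutation of the basis, block diagonal along the classical registers \<open>A\<close> and \<open>C\<close>;
  the entropy of a block-diagonal matrix is the sum of the entropies of its blocks, and
  scaling a density matrix by \<open>p\<close> changes its entropy to \<open>p S - \<eta>(p)\<close>.
\<close>

lemma sum_lessThan_mult: "(\<Sum>t<n * C. g t) = (\<Sum>a<n. \<Sum>c<C. g (a * C + c))" for n C :: nat
proof (induction n)
  case (Suc n)
  have "{..<Suc n * C} = {..<n * C} \<union> {n * C..<n * C + C}" by auto
  then have "(\<Sum>t<Suc n * C. g t) = (\<Sum>t<n * C. g t) + (\<Sum>t\<in>{n * C..<n * C + C}. g t)"
    by (simp add: sum.union_disjoint ivl_disj_int)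
  also have "(\<Sum>t\<in>{n * C..<n * C + C}. g t) = (\<Sum>c<C. g (n * C + c))"
    using sum.shift_bounds_nat_ivl[of g 0 "n * C" C] by (simp add: atLeast0LessThan add.commute)
  finally show ?case using Suc by simp
qed simp

lemma mult_add_div [simp]: "c < C \<Longrightarrow> (x * C + c) div C = x" for c C :: nat
  by simp

lemma mult_add_mod [simp]: "c < C \<Longrightarrow> (x * C + c) mod C = c" for c C :: nat
  by simp

lemma mult_add_less_mult: "a < n \<Longrightarrow> c < C \<Longrightarrow> a * C + c < n * C" for a c n C :: nat
proof -
  assume "a < n" "c < C"
  then have "a * C + c < (a + 1) * C" by simp
  also have "\<dots> \<le> n * C" using \<open>a < n\<close> by (intro mult_right_mono) auto
  finally show ?thesis .
qed

lemma nat_eq_div_mod_iff: "x = y \<longleftrightarrow> x div n = y div n \<and> x mod n = y mod n" for x y n :: nat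
  by (metis div_mult_mod_eq)

section \<open>Von Neumann entropy of structured matrices\<close>

definition poly_entropy :: "complex poly \<Rightarrow> real" where
  "poly_entropy p = - (\<Sum>z\<in>{z. poly p z = 0}. real (Polynomial.order z p) * eta (Re z))"

lemma vn_entropy_char_poly: "vn_entropy A = poly_entropy (char_poly A)"
  by (simp add: vn_entropy_def poly_entropy_def)

lemma poly_entropy_mult:
  assumes "p \<noteq> 0" "q \<noteq> 0"
  shows "poly_entropy (p * q) = poly_entropy p + poly_entropy q"
proof -
  let ?f = "\<lambda>p z. real (Polynomial.order z p) * eta (Re z)"
  let ?Z = "\<lambda>p. {z. poly p z = 0}"
  have fin: "finite (?Z p)" "finite (?Z q)" using assms poly_roots_finite by auto
  have roots: "?Z (p * q) = ?Z p \<union> ?Z q" by auto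
  have "(\<Sum>z\<in>?Z p \<union> ?Z q. ?f p z) = (\<Sum>z\<in>?Z p. ?f p z)"
    by (rule sum.mono_neutral_right) (use fin assms in \<open>auto simp: order_root\<close>)
  moreover have "(\<Sum>z\<in>?Z p \<union> ?Z q. ?f q z) = (\<Sum>z\<in>?Z q. ?f q z)"
    by (rule sum.mono_neutral_right) (use fin assms in \<open>auto simp: order_root\<close>)
  moreover have "(\<Sum>z\<in>?Z (p * q). ?f (p * q) z) = (\<Sum>z\<in>?Z p \<union> ?Z q. ?f p z + ?f q z)"
    unfolding roots by (rule sum.cong) (use assms in \<open>auto simp: order_mult algebra_simps\<close>)
  ultimately show ?thesis unfolding poly_entropy_def by (simp add: sum.distrib)
qed

lemma poly_entropy_linear: "poly_entropy [:-a, 1:] = - eta (Re a)"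
proof -
  have "{z. poly [:-a, 1:] z = 0} = {a}" by auto
  moreover have "Polynomial.order a [:-a, 1:] = 1" using order_power_n_n[of a 1] by simp
  ultimately show ?thesis unfolding poly_entropy_def by simp
qed

lemma poly_entropy_prod_linear: "poly_entropy (\<Prod>a\<leftarrow>as. [:-a, 1:]) = - (\<Sum>a\<leftarrow>as. eta (Re a))"
proof (induction as)
  case Nil
  then show ?case by (simp add: poly_entropy_def)
next
  case (Cons a as)
  have "(\<Prod>a\<leftarrow>as. [:-a, 1:]) \<noteq> 0" by (auto simp: prod_list_zero_iff)
  then have "poly_entropy ([:-a, 1:] * (\<Prod>a\<leftarrow>as. [:-a, 1:]))
      = poly_entropy [:-a, 1:] + poly_entropy (\<Prod>a\<leftarrow>as. [:-a, 1:])"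
    by (intro poly_entropy_mult) auto
  then show ?case using Cons by (simp add: poly_entropy_linear)
qed

lemma char_poly_nonzero: "A \<in> carrier_mat n n \<Longrightarrow> char_poly A \<noteq> 0"
  using degree_monic_char_poly[of A n] by auto

lemma vn_entropy_upper_triangular:
  assumes A: "A \<in> carrier_mat n n" and "upper_triangular A"
  shows "vn_entropy A = - (\<Sum>i<n. eta (Re (A $$ (i, i))))"
proof -
  have "vn_entropy A = - (\<Sum>a\<leftarrow>diag_mat A. eta (Re a))"
    by (simp add: vn_entropy_char_poly char_poly_upper_triangular[OF assms] poly_entropy_prod_linear)
  also have "(\<Sum>a\<leftarrow>diag_mat A. eta (Re a)) = (\<Sum>i<n. eta (Re (A $$ (i, i))))"
    using A by (simp add: diag_mat_def map_map o_def atLeast0LessThan[symmetric]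
        flip: sum_set_upt_conv_sum_list_nat)
  finally show ?thesis .
qed

lemma vn_entropy_diagonal:
  assumes A: "A \<in> carrier_mat n n"
    and "\<And>i j. i < n \<Longrightarrow> j < n \<Longrightarrow> i \<noteq> j \<Longrightarrow> A $$ (i, j) = 0"
  shows "vn_entropy A = - (\<Sum>i<n. eta (Re (A $$ (i, i))))"
  by (rule vn_entropy_upper_triangular[OF A]) (use assms in \<open>auto simp: upper_triangular_def\<close>)

lemma eta_zero [simp]: "eta 0 = 0"
  by (simp add: eta_def)

lemma vn_entropy_zero_mat: "vn_entropy (0\<^sub>m n n) = 0"
  by (subst vn_entropy_diagonal[of _ n]) auto

lemma vn_entropy_four_block_diag:
  assumes A: "A \<in> carrier_mat n n" and D: "D \<in> carrier_mat m m"
  shows "vn_entropy (four_block_mat A (0\<^sub>m n m) (0\<^sub>m m n) D) = vn_entropy A + vn_entropy D"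
proof -
  have "char_poly (four_block_mat A (0\<^sub>m n m) (0\<^sub>m m n) D) = char_poly A * char_poly D"
    by (rule char_poly_0_block[OF refl _ _ A _ D])
      (use char_poly_factorized[OF A] char_poly_factorized[OF D] in auto)
  then show ?thesis
    by (simp add: vn_entropy_char_poly poly_entropy_mult char_poly_nonzero[OF A] char_poly_nonzero[OF D])
qed

lemma vn_entropy_similar: "similar_mat A B \<Longrightarrow> vn_entropy A = vn_entropy B"
  by (simp add: vn_entropy_char_poly char_poly_similar)

lemma mtrace_mult_commute:
  assumes "A \<in> carrier_mat n m" "B \<in> carrier_mat m n"
  shows "mtrace (A * B) = mtrace (B * A)"
proof -
  have "mtrace (A * B) = (\<Sum>i<n. \<Sum>k<m. A $$ (i, k) * B $$ (k, i))"
    using assms by (simp add: mtrace_def scalar_prod_def atLeast0LessThan)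
  also have "\<dots> = (\<Sum>k<m. \<Sum>i<n. B $$ (k, i) * A $$ (i, k))"
    by (subst sum.swap) (simp add: mult.commute)
  also have "\<dots> = mtrace (B * A)"
    using assms by (simp add: mtrace_def scalar_prod_def atLeast0LessThan)
  finally show ?thesis .
qed

lemma mtrace_similar_mat_wit:
  assumes sim: "similar_mat_wit A B P Q" and A: "A \<in> carrier_mat n n"
  shows "mtrace A = mtrace B"
proof -
  from similar_mat_witD2[OF A sim] have B: "B \<in> carrier_mat n n"
    and P: "P \<in> carrier_mat n n" and Q: "Q \<in> carrier_mat n n"
    and QP: "Q * P = 1\<^sub>m n" and APBQ: "A = P * B * Q" by auto
  have "mtrace A = mtrace (Q * (P * B))"
    unfolding APBQ by (rule mtrace_mult_commute[of _ n n]) (use P B Q in auto)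
  also have "Q * (P * B) = B"
    using P B Q QP by (simp flip: assoc_mult_mat)
  finally show ?thesis .
qed

lemma qform_eigenvector:
  assumes A: "A \<in> carrier_mat n n" and v: "v \<in> carrier_vec n" and ev: "A *\<^sub>v v = a \<cdot>\<^sub>v v"
  shows "qform A v = a * complex_of_real (\<Sum>i<n. (cmod (v $ i))\<^sup>2)"
proof -
  have "qform A v = (\<Sum>i<n. cnj (v $ i) * (A *\<^sub>v v) $ i)"
    using A v by (simp add: qform_def scalar_prod_def atLeast0LessThan sum_distrib_left mult.assoc)
  also have "\<dots> = (\<Sum>i<n. a * complex_of_real ((cmod (v $ i))\<^sup>2))"
    using ev v by (simp add: ac_simps complex_norm_square del: of_real_power)
  finally show ?thesis by (simp add: sum_distrib_left)
qed

lemma psd_char_poly_root_nonneg: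
  assumes A: "A \<in> carrier_mat n n" and "psd A" and "poly (char_poly A) a = 0"
  shows "Re a \<ge> 0"
proof -
  have "eigenvalue A a" using assms eigenvalue_root_char_poly[OF A] by simp
  then obtain v where v: "v \<in> carrier_vec n" "v \<noteq> 0\<^sub>v n" "A *\<^sub>v v = a \<cdot>\<^sub>v v"
    using A unfolding eigenvalue_def eigenvector_def by auto
  then obtain i where "i < n" "v $ i \<noteq> 0" by (auto simp: vec_eq_iff)
  then have norm_pos: "(\<Sum>i<n. (cmod (v $ i))\<^sup>2) > 0"
    by (intro sum_pos2[of _ i]) auto
  have "Re (qform A v) \<ge> 0" using assms v(1) A unfolding psd_def by auto
  then have "Re a * (\<Sum>i<n. (cmod (v $ i))\<^sup>2) \<ge> 0"
    using qform_eigenvector[OF A v(1,3)] by simp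
  then show ?thesis using norm_pos by (simp add: zero_le_mult_iff)
qed

lemma eta_mult: "s \<ge> 0 \<Longrightarrow> x \<ge> 0 \<Longrightarrow> eta (s * x) = s * eta x + x * eta s"
  by (cases "s = 0 \<or> x = 0") (auto simp: eta_def log_mult algebra_simps)

text \<open>Triangularise by Schur: the diagonal carries the (nonnegative) eigenvalues.\<close>
lemma vn_entropy_smult:
  assumes A: "A \<in> carrier_mat n n" and "psd A" and s: "s \<ge> 0"
  shows "vn_entropy (complex_of_real s \<cdot>\<^sub>m A) = s * vn_entropy A - Re (mtrace A) * eta s"
proof -
  obtain as where cp: "char_poly A = (\<Prod>a\<leftarrow>as. [:-a, 1:])"
    using char_poly_factorized[OF A] by auto
  obtain B P Q where "schur_decomposition A as = (B, P, Q)"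
    by (cases "schur_decomposition A as") auto
  from schur_decomposition[OF A cp this] have sim: "similar_mat_wit A B P Q"
    and ut: "upper_triangular B" and diag: "diag_mat B = as" by auto
  from similar_mat_witD2[OF A sim] have B: "B \<in> carrier_mat n n" by auto
  have diag_nonneg: "Re (B $$ (i, i)) \<ge> 0" if "i < n" for i
    using psd_char_poly_root_nonneg[OF A \<open>psd A\<close>] that diag B
    by (auto simp: cp poly_prod_list_zero_iff diag_mat_def)
  have "similar_mat (complex_of_real s \<cdot>\<^sub>m A) (complex_of_real s \<cdot>\<^sub>m B)"
    using similar_mat_wit_smult[OF sim] unfolding similar_mat_def by blast
  then have "vn_entropy (complex_of_real s \<cdot>\<^sub>m A) = vn_entropy (complex_of_real s \<cdot>\<^sub>m B)"
    by (rule vn_entropy_similar)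
  also have "\<dots> = - (\<Sum>i<n. eta (Re ((complex_of_real s \<cdot>\<^sub>m B) $$ (i, i))))"
    by (rule vn_entropy_upper_triangular) (use B ut in \<open>auto simp: upper_triangular_def\<close>)
  also have "\<dots> = - (\<Sum>i<n. s * eta (Re (B $$ (i, i))) + Re (B $$ (i, i)) * eta s)"
    using B s diag_nonneg by (auto intro!: sum.cong simp: eta_mult)
  also have "\<dots> = s * (- (\<Sum>i<n. eta (Re (B $$ (i, i))))) - Re (\<Sum>i<n. B $$ (i, i)) * eta s"
    by (simp add: sum.distrib sum_distrib_left sum_distrib_right)
  also have "- (\<Sum>i<n. eta (Re (B $$ (i, i)))) = vn_entropy A"
  proof -
    have "similar_mat A B" using sim unfolding similar_mat_def by blast
    then show ?thesis using vn_entropy_upper_triangular[OF B ut] by (simp add: vn_entropy_similar)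
  qed
  also have "(\<Sum>i<n. B $$ (i, i)) = mtrace A"
    using mtrace_similar_mat_wit[OF sim A] B by (simp add: mtrace_def)
  finally show ?thesis .
qed


definition perm_mat :: "nat \<Rightarrow> (nat \<Rightarrow> nat) \<Rightarrow> complex mat" where
  "perm_mat N \<pi> = mat N N (\<lambda>(i, j). if j = \<pi> i then 1 else 0)"

lemma perm_mat_inverse:
  assumes bij: "bij_betw \<pi> {..<N} {..<N}"
  shows "perm_mat N \<pi> * transpose_mat (perm_mat N \<pi>) = 1\<^sub>m N"
    and "transpose_mat (perm_mat N \<pi>) * perm_mat N \<pi> = 1\<^sub>m N"
proof -
  have \<pi>: "\<And>i. i < N \<Longrightarrow> \<pi> i < N" using bij by (auto simp: bij_betw_def)
  have \<pi>_eq: "\<And>i j. i < N \<Longrightarrow> j < N \<Longrightarrow> \<pi> i = \<pi> j \<longleftrightarrow> i = j"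
    using bij by (auto simp: bij_betw_def inj_on_def)
  show "perm_mat N \<pi> * transpose_mat (perm_mat N \<pi>) = 1\<^sub>m N"
  proof (rule eq_matI)
    fix i j assume "i < dim_row (1\<^sub>m N)" "j < dim_col (1\<^sub>m N)"
    then show "(perm_mat N \<pi> * transpose_mat (perm_mat N \<pi>)) $$ (i, j) = 1\<^sub>m N $$ (i, j)"
      using \<pi> \<pi>_eq by (simp add: perm_mat_def scalar_prod_def if_distrib[of "\<lambda>x. x * _"] sum.delta' cong: if_cong)
  qed (auto simp: perm_mat_def)
  have reindex: "(\<Sum>k\<in>{0..<N}. g (\<pi> k)) = (\<Sum>k\<in>{0..<N}. g k)" for g :: "nat \<Rightarrow> complex"
    using sum.reindex_bij_betw[OF bij] by (simp add: atLeast0LessThan)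
  show "transpose_mat (perm_mat N \<pi>) * perm_mat N \<pi> = 1\<^sub>m N"
  proof (rule eq_matI)
    fix i j assume ij: "i < dim_row (1\<^sub>m N)" "j < dim_col (1\<^sub>m N)"
    then have "(transpose_mat (perm_mat N \<pi>) * perm_mat N \<pi>) $$ (i, j)
        = (\<Sum>k\<in>{0..<N}. (if i = \<pi> k then 1 else 0) * (if j = \<pi> k then 1 else 0))"
      by (simp add: perm_mat_def scalar_prod_def)
    also have "\<dots> = (\<Sum>k\<in>{0..<N}. (if i = k then 1 else 0) * (if j = k then 1 else 0))"
      by (rule reindex[where g = "\<lambda>k. (if i = k then 1 else 0) * (if j = k then 1 else 0)"])
    also have "\<dots> = 1\<^sub>m N $$ (i, j)"
      using ij by (simp add: if_distrib[of "\<lambda>x. x * _"] sum.delta cong: if_cong)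
    finally show "(transpose_mat (perm_mat N \<pi>) * perm_mat N \<pi>) $$ (i, j) = 1\<^sub>m N $$ (i, j)" .
  qed (auto simp: perm_mat_def)
qed

lemma perm_mat_conjugate:
  assumes A: "A \<in> carrier_mat N N" and \<pi>: "\<And>i. i < N \<Longrightarrow> \<pi> i < N"
  shows "perm_mat N \<pi> * A * transpose_mat (perm_mat N \<pi>) = mat N N (\<lambda>(i, j). A $$ (\<pi> i, \<pi> j))"
proof -
  have "perm_mat N \<pi> * A = mat N N (\<lambda>(i, l). A $$ (\<pi> i, l))"
    by (rule eq_matI) (use A \<pi> in \<open>auto simp: perm_mat_def scalar_prod_def if_distrib[of "\<lambda>x. x * _"]
        sum.delta' cong: if_cong\<close>)
  moreover have "mat N N (\<lambda>(i, l). A $$ (\<pi> i, l)) * transpose_mat (perm_mat N \<pi>)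
      = mat N N (\<lambda>(i, j). A $$ (\<pi> i, \<pi> j))"
    by (rule eq_matI) (use \<pi> in \<open>auto simp: perm_mat_def scalar_prod_def if_distrib[of "\<lambda>x. _ * x"]
        sum.delta' cong: if_cong\<close>)
  ultimately show ?thesis by simp
qed

lemma vn_entropy_permute:
  assumes A: "A \<in> carrier_mat N N" and bij: "bij_betw \<pi> {..<N} {..<N}"
  shows "vn_entropy (mat N N (\<lambda>(i, j). A $$ (\<pi> i, \<pi> j))) = vn_entropy A"
proof -
  have \<pi>: "\<And>i. i < N \<Longrightarrow> \<pi> i < N" using bij by (auto simp: bij_betw_def)
  have "similar_mat (mat N N (\<lambda>(i, j). A $$ (\<pi> i, \<pi> j))) A"
    by (rule similar_matI[OF _ perm_mat_inverse[OF bij] perm_mat_conjugate[OF A \<pi>, symmetric]])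
      (use A in \<open>auto simp: perm_mat_def\<close>)
  then show ?thesis by (rule vn_entropy_similar)
qed

definition block_diag :: "nat \<Rightarrow> nat \<Rightarrow> (nat \<Rightarrow> complex mat) \<Rightarrow> complex mat" where
  "block_diag N B W = mat (N * B) (N * B)
     (\<lambda>(i, j). if i div B = j div B then W (i div B) $$ (i mod B, j mod B) else 0)"

lemma block_diag_Suc:
  assumes W: "W N \<in> carrier_mat B B"
  shows "block_diag (Suc N) B W = four_block_mat (block_diag N B W) (0\<^sub>m (N * B) B) (0\<^sub>m B (N * B)) (W N)"
proof (rule eq_matI)
  fix i j
  assume "i < dim_row (four_block_mat (block_diag N B W) (0\<^sub>m (N * B) B) (0\<^sub>m B (N * B)) (W N))"
    "j < dim_col (four_block_mat (block_diag N B W) (0\<^sub>m (N * B) B) (0\<^sub>m B (N * B)) (W N))"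
  then have ij: "i < N * B + B" "j < N * B + B" using W by (auto simp: block_diag_def)
  have lo: "\<And>x. x < N * B \<Longrightarrow> x div B < N" by (simp add: less_mult_imp_div_less)
  have hi: "x div B = N \<and> x mod B = x - N * B" if "N * B \<le> x" "x < N * B + B" for x
  proof -
    define t where "t = x - N * B"
    have x: "x = N * B + t" and "t < B" using that by (simp_all add: t_def)
    then show ?thesis unfolding x by simp
  qed
  show "block_diag (Suc N) B W $$ (i, j)
      = four_block_mat (block_diag N B W) (0\<^sub>m (N * B) B) (0\<^sub>m B (N * B)) (W N) $$ (i, j)"
    using ij W lo[of i] lo[of j] hi[of i] hi[of j]
    by (cases "i < N * B"; cases "j < N * B") (auto simp: block_diag_def)
qed (use W in \<open>auto simp: block_diag_def\<close>)

lemma vn_entropy_block_diag: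
  assumes "\<And>t. t < N \<Longrightarrow> W t \<in> carrier_mat B B"
  shows "vn_entropy (block_diag N B W) = (\<Sum>t<N. vn_entropy (W t))"
  using assms
proof (induction N)
  case 0
  show ?case by (subst vn_entropy_diagonal[of _ 0]) (auto simp: block_diag_def)
next
  case (Suc N)
  then have W: "W N \<in> carrier_mat B B" by auto
  have "vn_entropy (block_diag (Suc N) B W) = vn_entropy (block_diag N B W) + vn_entropy (W N)"
    unfolding block_diag_Suc[of W N B, OF W]
    by (rule vn_entropy_four_block_diag) (use W in \<open>auto simp: block_diag_def\<close>)
  then show ?case using Suc by simp
qed

definition reorder_BC :: "nat \<Rightarrow> nat \<Rightarrow> nat \<Rightarrow> nat" where
  "reorder_BC B C i = (i div B div C) * (B * C) + (i mod B) * C + i div B mod C"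

text \<open>
  \<open>reorder_BC B C\<close> sends the index \<open>(a * C + c) * B + b\<close> of \<open>\<complex>\<^sup>n \<otimes> \<complex>\<^sup>C \<otimes> \<complex>\<^sup>B\<close> to the index
  \<open>a * (B * C) + b * C + c\<close> of \<open>\<complex>\<^sup>n \<otimes> \<complex>\<^sup>B \<otimes> \<complex>\<^sup>C\<close>.
\<close>
lemma reorder_BC_digits:
  fixes i n B C :: nat
  assumes i: "i < n * (B * C)"
  shows "i div B div C < n" "i mod B < B" "i div B mod C < C"
proof -
  have "B > 0" "C > 0" using i by (cases B; cases C; auto)+
  moreover have "i div B < n * C" using i by (simp add: less_mult_imp_div_less ac_simps)
  ultimately show "i div B div C < n" "i mod B < B" "i div B mod C < C"
    by (auto simp: less_mult_imp_div_less)
qed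

lemma bij_betw_reorder_BC: "bij_betw (reorder_BC B C) {..<n * (B * C)} {..<n * (B * C)}"
proof -
  have decode: "reorder_BC B C i < n * (B * C) \<and> reorder_BC B C i div (B * C) = i div B div C
      \<and> (reorder_BC B C i mod (B * C)) div C = i mod B \<and> reorder_BC B C i mod C = i div B mod C"
    if i: "i < n * (B * C)" for i
  proof -
    define a b c where "a = i div B div C" and "b = i mod B" and "c = i div B mod C"
    have a: "a < n" and b: "b < B" and c: "c < C"
      using reorder_BC_digits[OF i] by (simp_all add: a_def b_def c_def)
    have bc: "b * C + c < B * C" by (rule mult_add_less_mult[OF b c])
    have eq1: "reorder_BC B C i = a * (B * C) + (b * C + c)"
      by (simp add: reorder_BC_def a_def b_def c_def add.assoc)
    have eq2: "reorder_BC B C i = (a * B + b) * C + c"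
      by (simp add: reorder_BC_def a_def b_def c_def algebra_simps)
    have "reorder_BC B C i < n * (B * C)" unfolding eq1 by (rule mult_add_less_mult[OF a bc])
    moreover have "reorder_BC B C i div (B * C) = a" "reorder_BC B C i mod (B * C) = b * C + c"
      unfolding eq1 using bc by simp_all
    moreover have "(b * C + c) div C = b" "reorder_BC B C i mod C = c"
      unfolding eq2 using c by simp_all
    ultimately show ?thesis unfolding a_def b_def c_def by simp
  qed
  have "inj_on (reorder_BC B C) {..<n * (B * C)}"
  proof (rule inj_onI)
    fix i j assume "i \<in> {..<n * (B * C)}" "j \<in> {..<n * (B * C)}" "reorder_BC B C i = reorder_BC B C j"
    then have "i div B div C = j div B div C" "i mod B = j mod B" "i div B mod C = j div B mod C"
      using decode[of i] decode[of j] by auto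
    then have "i div B = j div B" using nat_eq_div_mod_iff[of "i div B" "j div B" C] by simp
    then show "i = j" using \<open>i mod B = j mod B\<close> nat_eq_div_mod_iff[of i j B] by simp
  qed
  moreover have "reorder_BC B C ` {..<n * (B * C)} \<subseteq> {..<n * (B * C)}" using decode by auto
  ultimately show ?thesis
    unfolding bij_betw_def using endo_inj_surj[of "{..<n * (B * C)}" "reorder_BC B C"] by simp
qed

lemma vn_entropy_block_diag_outer_factors:
  assumes M: "M \<in> carrier_mat (n * (B * C)) (n * (B * C))"
    and W: "\<And>a c. a < n \<Longrightarrow> c < C \<Longrightarrow> W a c \<in> carrier_mat B B"
    and entries: "\<And>a a' b b' c c'. a < n \<Longrightarrow> a' < n \<Longrightarrow> b < B \<Longrightarrow> b' < B \<Longrightarrow> c < C \<Longrightarrow> c' < C \<Longrightarrow>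
      M $$ (a * (B * C) + b * C + c, a' * (B * C) + b' * C + c')
        = (if a = a' \<and> c = c' then W a c $$ (b, b') else 0)"
  shows "vn_entropy M = (\<Sum>a<n. \<Sum>c<C. vn_entropy (W a c))"
proof -
  let ?N = "n * (B * C)" and ?\<pi> = "reorder_BC B C"
  have N_alt: "?N = (n * C) * B" by (simp add: ac_simps)
  have "vn_entropy M = vn_entropy (mat ?N ?N (\<lambda>(i, j). M $$ (?\<pi> i, ?\<pi> j)))"
    by (rule vn_entropy_permute[symmetric, OF M bij_betw_reorder_BC])
  also have "mat ?N ?N (\<lambda>(i, j). M $$ (?\<pi> i, ?\<pi> j)) = block_diag (n * C) B (\<lambda>t. W (t div C) (t mod C))"
  proof (rule eq_matI)
    fix i j assume "i < dim_row (block_diag (n * C) B (\<lambda>t. W (t div C) (t mod C)))"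
      "j < dim_col (block_diag (n * C) B (\<lambda>t. W (t div C) (t mod C)))"
    then have ij: "i < ?N" "j < ?N" by (auto simp: block_diag_def N_alt)
    have "M $$ (?\<pi> i, ?\<pi> j) = (if i div B div C = j div B div C \<and> i div B mod C = j div B mod C
        then W (i div B div C) (i div B mod C) $$ (i mod B, j mod B) else 0)"
      unfolding reorder_BC_def using reorder_BC_digits[OF ij(1)] reorder_BC_digits[OF ij(2)]
      by (intro entries) auto
    moreover have "(i div B div C = j div B div C \<and> i div B mod C = j div B mod C) = (i div B = j div B)"
      by (simp add: nat_eq_div_mod_iff[of "i div B" "j div B" C])
    ultimately show "mat ?N ?N (\<lambda>(i, j). M $$ (?\<pi> i, ?\<pi> j)) $$ (i, j)
        = block_diag (n * C) B (\<lambda>t. W (t div C) (t mod C)) $$ (i, j)"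
      using ij by (simp add: block_diag_def N_alt)
  qed (auto simp: block_diag_def N_alt)
  also have "vn_entropy (block_diag (n * C) B (\<lambda>t. W (t div C) (t mod C)))
      = (\<Sum>t<n * C. vn_entropy (W (t div C) (t mod C)))"
  proof (rule vn_entropy_block_diag)
    fix t assume t: "t < n * C"
    then have "C > 0" by (cases C) auto
    then show "W (t div C) (t mod C) \<in> carrier_mat B B"
      using t by (intro W) (auto simp: less_mult_imp_div_less)
  qed
  also have "\<dots> = (\<Sum>a<n. \<Sum>c<C. vn_entropy (W a c))"
    by (subst sum_lessThan_mult) simp
  finally show ?thesis .
qed

section \<open>Matrices, quadratic forms and positivity\<close>

lemma msum_index [simp]:
  "i < n \<Longrightarrow> j < m \<Longrightarrow> msum n m f I $$ (i, j) = (\<Sum>k\<in>I. f k $$ (i, j))"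
  "dim_row (msum n m f I) = n" "dim_col (msum n m f I) = m"
  by (auto simp: msum_def)

lemma msum_carrier: "msum n m f I \<in> carrier_mat n m"
  unfolding msum_def by (rule mat_carrier)

lemma kron_index:
  "i < dim_row A * dim_row B \<Longrightarrow> j < dim_col A * dim_col B \<Longrightarrow>
    kron A B $$ (i, j) = A $$ (i div dim_row B, j div dim_col B) * B $$ (i mod dim_row B, j mod dim_col B)"
  "dim_row (kron A B) = dim_row A * dim_row B" "dim_col (kron A B) = dim_col A * dim_col B"
  by (auto simp: kron_def)

lemma kron_index_mult_add:
  assumes A: "A \<in> carrier_mat m m'" and B: "B \<in> carrier_mat k k'"
    and b: "b < m" "b' < m'" and c: "c < k" "c' < k'"
  shows "kron A B $$ (b * k + c, b' * k' + c') = A $$ (b, b') * B $$ (c, c')"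
proof -
  have "b * k + c < m * k" "b' * k' + c' < m' * k'" using mult_add_less_mult b c by auto
  then show ?thesis using A B c by (simp add: kron_def)
qed

lemma kron_carrier:
  "A \<in> carrier_mat a a' \<Longrightarrow> B \<in> carrier_mat b b' \<Longrightarrow> kron A B \<in> carrier_mat (a * b) (a' * b')"
  by (simp add: kron_def)

lemma proj_index [simp]:
  "i < n \<Longrightarrow> j < n \<Longrightarrow> proj n k $$ (i, j) = (if i = k \<and> j = k then 1 else 0)"
  "dim_row (proj n k) = n" "dim_col (proj n k) = n"
  by (auto simp: proj_def)

lemma proj_carrier [simp]: "proj n k \<in> carrier_mat n n"
  unfolding carrier_mat_def by simp

lemma mtrace_proj: "d \<ge> 1 \<Longrightarrow> mtrace (proj d 0) = 1"
  by (simp add: mtrace_def sum.delta' if_distrib cong: if_cong)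

lemma sum_mult_if_both_eq:
  "c < C \<Longrightarrow> (\<Sum>j<C. f j * (if c = j \<and> c' = j then 1 else 0)) = (if c = c' then f c else (0::complex))"
  for c C :: nat
proof (cases "c = c'")
  case True
  then show "c < C \<Longrightarrow> ?thesis" by (simp add: if_distrib[of "\<lambda>x. _ * x"] cong: if_cong)
qed (auto intro!: sum.neutral)

lemma sum_if_less: "C' \<le> C \<Longrightarrow> (\<Sum>c<C. if c < C' then f c else 0) = (\<Sum>c<C'. f c)" for C C' :: nat
proof -
  assume "C' \<le> C"
  then have "{c \<in> {..<C}. c < C'} = {..<C'}" by auto
  then show ?thesis using sum.inter_filter[of "{..<C}" f "\<lambda>c. c < C'"] by simp
qed

definition pad :: "nat \<Rightarrow> complex mat \<Rightarrow> complex mat" where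
  "pad m X = mat m m (\<lambda>(i, j). if i < dim_row X \<and> j < dim_col X then X $$ (i, j) else 0)"

lemma pad_carrier: "pad m X \<in> carrier_mat m m"
  unfolding pad_def by (rule mat_carrier)

lemma pad_index:
  "i < m \<Longrightarrow> j < m \<Longrightarrow> pad m X $$ (i, j) = (if i < dim_row X \<and> j < dim_col X then X $$ (i, j) else 0)"
  unfolding pad_def by simp

lemma vn_entropy_pad:
  assumes X: "X \<in> carrier_mat k k" and km: "k \<le> m"
  shows "vn_entropy (pad m X) = vn_entropy X"
proof -
  have "pad m X = four_block_mat X (0\<^sub>m k (m - k)) (0\<^sub>m (m - k) k) (0\<^sub>m (m - k) (m - k))"
    by (rule eq_matI) (use X km in \<open>auto simp: pad_index pad_def\<close>)
  then show ?thesis by (simp add: vn_entropy_four_block_diag[OF X] vn_entropy_zero_mat)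
qed

lemma mtrace_pad:
  assumes X: "X \<in> carrier_mat k k" and km: "k \<le> m"
  shows "mtrace (pad m X) = mtrace X"
proof -
  have "mtrace (pad m X) = (\<Sum>i<m. if i < k then X $$ (i, i) else 0)"
    using X by (auto simp: mtrace_def pad_def intro!: sum.cong)
  also have "\<dots> = mtrace X" using X by (simp add: sum_if_less[OF km] mtrace_def)
  finally show ?thesis .
qed

lemma qform_add:
  assumes "A \<in> carrier_mat N N" "B \<in> carrier_mat N N" "v \<in> carrier_vec N"
  shows "qform (A + B) v = qform A v + qform B v"
  using assms by (simp add: qform_def distrib_left distrib_right sum.distrib)

lemma qform_smult:
  assumes "A \<in> carrier_mat N N" "v \<in> carrier_vec N"
  shows "qform (c \<cdot>\<^sub>m A) v = c * qform A v"
  using assms by (simp add: qform_def sum_distrib_left ac_simps)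

lemma qform_lincomb:
  assumes v: "v \<in> carrier_vec B"
  shows "qform (mat B B (\<lambda>(b, b'). \<Sum>x\<in>X. f x * A x $$ (b, b'))) v = (\<Sum>x\<in>X. f x * qform (A x) v)"
proof -
  have "qform (mat B B (\<lambda>(b, b'). \<Sum>x\<in>X. f x * A x $$ (b, b'))) v
      = (\<Sum>i<B. \<Sum>j<B. \<Sum>x\<in>X. f x * (cnj (v $ i) * A x $$ (i, j) * v $ j))"
    using v by (simp add: qform_def sum_distrib_left sum_distrib_right ac_simps)
  also have "\<dots> = (\<Sum>x\<in>X. \<Sum>i<B. \<Sum>j<B. f x * (cnj (v $ i) * A x $$ (i, j) * v $ j))"
    by (simp add: sum.swap[of _ X])
  also have "\<dots> = (\<Sum>x\<in>X. f x * qform (A x) v)"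
    using v by (simp add: qform_def sum_distrib_left)
  finally show ?thesis .
qed

lemma qform_msum:
  assumes "v \<in> carrier_vec N"
  shows "qform (msum N N f I) v = (\<Sum>k\<in>I. qform (f k) v)"
proof -
  have "msum N N f I = mat N N (\<lambda>(b, b'). \<Sum>k\<in>I. 1 * f k $$ (b, b'))"
    unfolding msum_def by (rule cong_mat) auto
  then show ?thesis using qform_lincomb[OF assms, of "\<lambda>_. 1"] by simp
qed

lemma psdI:
  assumes "A \<in> carrier_mat N N"
    and "\<And>v. v \<in> carrier_vec N \<Longrightarrow> Im (qform A v) = 0 \<and> Re (qform A v) \<ge> 0"
  shows "psd A"
  using assms unfolding psd_def by auto

lemma psdD:
  assumes "psd A" "A \<in> carrier_mat N N" "v \<in> carrier_vec N"
  shows "Im (qform A v) = 0" "Re (qform A v) \<ge> 0"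
  using assms unfolding psd_def by auto

lemma psd_add:
  assumes A: "A \<in> carrier_mat N N" and B: "B \<in> carrier_mat N N" and "psd A" "psd B"
  shows "psd (A + B)"
  by (rule psdI[of _ N]) (use assms psdD[of A N] psdD[of B N] in \<open>auto simp: qform_add\<close>)

lemma psd_lincomb:
  assumes "\<And>x. x \<in> X \<Longrightarrow> f x \<ge> 0" and "\<And>x. x \<in> X \<Longrightarrow> psd (A x) \<and> A x \<in> carrier_mat B B"
  shows "psd (mat B B (\<lambda>(b, b'). \<Sum>x\<in>X. complex_of_real (f x) * A x $$ (b, b')))"
  by (rule psdI[of _ B])
    (use assms psdD[of "A _" B] in \<open>auto simp: qform_lincomb Im_sum Re_sum intro!: sum_nonneg\<close>)

lemma psd_msum:
  assumes "\<And>k. k \<in> I \<Longrightarrow> psd (f k) \<and> f k \<in> carrier_mat N N"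
  shows "psd (msum N N f I)"
proof -
  have "msum N N f I = mat N N (\<lambda>(b, b'). \<Sum>k\<in>I. complex_of_real 1 * f k $$ (b, b'))"
    unfolding msum_def by (rule cong_mat) auto
  then show ?thesis using psd_lincomb[of I "\<lambda>_. 1" f N] assms by simp
qed

lemma qform_eq_sum_image:
  assumes w: "w \<in> carrier_vec N" and g: "\<And>a. a < m \<Longrightarrow> g a < N" and inj: "inj_on g {..<m}"
    and off: "\<And>i j. i < N \<Longrightarrow> j < N \<Longrightarrow> i \<notin> g ` {..<m} \<or> j \<notin> g ` {..<m} \<Longrightarrow>
      cnj (w $ i) * M $$ (i, j) * w $ j = 0"
  shows "qform M w = (\<Sum>a<m. \<Sum>b<m. cnj (w $ g a) * M $$ (g a, g b) * w $ g b)"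
proof -
  let ?G = "g ` {..<m}"
  have sub: "?G \<subseteq> {..<N}" using g by auto
  have "qform M w = (\<Sum>i<N. \<Sum>j<N. cnj (w $ i) * M $$ (i, j) * w $ j)"
    using w by (simp add: qform_def)
  also have "\<dots> = (\<Sum>i<N. \<Sum>j\<in>?G. cnj (w $ i) * M $$ (i, j) * w $ j)"
    by (intro sum.cong refl sum.mono_neutral_right) (use sub off in auto)
  also have "\<dots> = (\<Sum>i\<in>?G. \<Sum>j\<in>?G. cnj (w $ i) * M $$ (i, j) * w $ j)"
    by (rule sum.mono_neutral_right) (use sub off in \<open>auto intro!: sum.neutral\<close>)
  also have "\<dots> = (\<Sum>a<m. \<Sum>b<m. cnj (w $ g a) * M $$ (g a, g b) * w $ g b)"
    by (simp add: sum.reindex[OF inj])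
  finally show ?thesis .
qed

lemma psd_compression:
  assumes X: "X \<in> carrier_mat N N" "psd X" and g: "\<And>a. a < m \<Longrightarrow> g a < N"
    and inj: "inj_on g {..<m}"
  shows "psd (mat m m (\<lambda>(a, b). X $$ (g a, g b)))"
proof (rule psdI[of _ m])
  fix v :: "complex vec" assume v: "v \<in> carrier_vec m"
  define w where "w = vec N (\<lambda>i. if i \<in> g ` {..<m} then v $ inv_into {..<m} g i else 0)"
  have w: "w \<in> carrier_vec N" unfolding w_def by simp
  have wg: "w $ g a = v $ a" if "a < m" for a
    unfolding w_def using g inj that by (simp add: inv_into_f_f)
  have "qform X w = (\<Sum>a<m. \<Sum>b<m. cnj (w $ g a) * X $$ (g a, g b) * w $ g b)"
    by (rule qform_eq_sum_image[OF w g inj]) (auto simp: w_def)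
  also have "\<dots> = qform (mat m m (\<lambda>(a, b). X $$ (g a, g b))) v"
    using v by (simp add: qform_def wg)
  finally show "Im (qform (mat m m (\<lambda>(a, b). X $$ (g a, g b))) v) = 0 \<and>
      Re (qform (mat m m (\<lambda>(a, b). X $$ (g a, g b))) v) \<ge> 0"
    using psdD[OF X(2,1) w] by simp
qed simp

lemma psd_zero_extension:
  assumes S: "S \<in> carrier_mat m m" "psd S" and M: "M \<in> carrier_mat N N"
    and g: "\<And>a. a < m \<Longrightarrow> g a < N" and inj: "inj_on g {..<m}"
    and on: "\<And>a b. a < m \<Longrightarrow> b < m \<Longrightarrow> M $$ (g a, g b) = S $$ (a, b)"
    and off: "\<And>i j. i < N \<Longrightarrow> j < N \<Longrightarrow> i \<notin> g ` {..<m} \<or> j \<notin> g ` {..<m} \<Longrightarrow> M $$ (i, j) = 0"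
  shows "psd M"
proof (rule psdI[OF M])
  fix v :: "complex vec" assume v: "v \<in> carrier_vec N"
  have "qform M v = (\<Sum>a<m. \<Sum>b<m. cnj (v $ g a) * M $$ (g a, g b) * v $ g b)"
    by (rule qform_eq_sum_image[OF v g inj]) (use off in auto)
  also have "\<dots> = qform S (vec m (\<lambda>a. v $ g a))"
    by (simp add: qform_def on)
  finally show "Im (qform M v) = 0 \<and> Re (qform M v) \<ge> 0"
    using psdD[OF S(2,1), of "vec m (\<lambda>a. v $ g a)"] by simp
qed

lemma psd_pad:
  assumes X: "X \<in> carrier_mat k k" and "k \<le> m" and "psd X"
  shows "psd (pad m X)"
  by (rule psd_zero_extension[OF X(1) \<open>psd X\<close> pad_carrier, of id])
    (use assms in \<open>auto simp: pad_index\<close>)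

lemma psd_kron_proj:
  assumes S: "S \<in> carrier_mat m m" "psd S" and d: "d \<ge> 1"
  shows "psd (kron S (proj d 0))"
proof (rule psd_zero_extension[OF S, of _ "m * d" "\<lambda>a. a * d + 0"])
  show "kron S (proj d 0) \<in> carrier_mat (m * d) (m * d)"
    by (rule kron_carrier[OF S(1) proj_carrier])
  show "\<And>a. a < m \<Longrightarrow> a * d + 0 < m * d" using d by (intro mult_add_less_mult) auto
  show "inj_on (\<lambda>a. a * d + 0) {..<m}" using d by (auto intro: inj_onI)
  show "\<And>a b. a < m \<Longrightarrow> b < m \<Longrightarrow> kron S (proj d 0) $$ (a * d + 0, b * d + 0) = S $$ (a, b)"
    using d by (subst kron_index_mult_add[OF S(1) proj_carrier]) auto
  fix i j assume ij: "i < m * d" "j < m * d" and "i \<notin> (\<lambda>a. a * d + 0) ` {..<m} \<or> j \<notin> (\<lambda>a. a * d + 0) ` {..<m}"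
  moreover have "i = i div d * d + 0" if "i mod d = 0" for i
    using that div_mult_mod_eq[of i d] by simp
  moreover have "i div d < m" if "i < m * d" for i
    using that by (simp add: less_mult_imp_div_less)
  ultimately have "i mod d \<noteq> 0 \<or> j mod d \<noteq> 0" by blast
  moreover have "i mod d < d" "j mod d < d" using d by auto
  ultimately show "kron S (proj d 0) $$ (i, j) = 0" using S ij by (auto simp: kron_index)
qed

lemma density_pad:
  assumes "density k X" "k \<le> m"
  shows "density m (pad m X)"
proof -
  have X: "X \<in> carrier_mat k k" using assms(1) by (simp add: density_def)
  show ?thesis
    using assms psd_pad[OF X assms(2)] mtrace_pad[OF X assms(2)] pad_carrier by (simp add: density_def)
qed

lemma density_proj:
  assumes "m \<ge> 1"
  shows "density m (proj m 0)"
proof -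
  have "proj m 0 = pad m (1\<^sub>m 1)"
    by (rule eq_matI) (use assms in \<open>auto simp: pad_index pad_def\<close>)
  moreover have "psd (1\<^sub>m 1 :: complex mat)"
    by (rule psdI[of _ 1])
      (auto simp: qform_def complex_norm_square mult.commute simp del: of_real_power)
  ultimately show ?thesis
    using assms density_pad[of 1 "1\<^sub>m 1"] by (simp add: density_def mtrace_def)
qed

lemma cptpD:
  assumes "cptp n m D"
  shows "\<And>A. A \<in> carrier_mat n n \<Longrightarrow> D A \<in> carrier_mat m m"
    and "\<And>A B. A \<in> carrier_mat n n \<Longrightarrow> B \<in> carrier_mat n n \<Longrightarrow> D (A + B) = D A + D B"
    and "\<And>A c. A \<in> carrier_mat n n \<Longrightarrow> D (c \<cdot>\<^sub>m A) = c \<cdot>\<^sub>m D A"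
    and "\<And>A. A \<in> carrier_mat n n \<Longrightarrow> mtrace (D A) = mtrace A"
    and "\<And>k X. X \<in> carrier_mat (k * n) (k * n) \<Longrightarrow> psd X \<Longrightarrow> psd (ampliate k n m D X)"
  using assms unfolding cptp_def by blast+

section \<open>Encodings and the entropies of their states\<close>

lemma valid_encoding_density:
  "valid_encoding n e \<Longrightarrow> x < n \<Longrightarrow> j < dimC e \<Longrightarrow> density (dimB e) (omega e x j)"
  unfolding valid_encoding_def by blast

lemma valid_encoding_omega_carrier:
  "valid_encoding n e \<Longrightarrow> x < n \<Longrightarrow> j < dimC e \<Longrightarrow> omega e x j \<in> carrier_mat (dimB e) (dimB e)"
  using valid_encoding_density unfolding density_def by blast

lemma valid_encoding_pcond_nonneg:
  "valid_encoding n e \<Longrightarrow> x < n \<Longrightarrow> j < dimC e \<Longrightarrow> pcond e x j \<ge> 0"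
  unfolding valid_encoding_def by blast

lemma valid_encoding_pcond_sum:
  "valid_encoding n e \<Longrightarrow> x < n \<Longrightarrow> (\<Sum>j<dimC e. pcond e x j) = 1"
  unfolding valid_encoding_def by blast

lemma valid_encoding_dimC_pos:
  assumes v: "valid_encoding n e" and "n \<ge> 1"
  shows "dimC e \<ge> 1"
  using valid_encoding_pcond_sum[OF v, of 0] assms by (cases "dimC e") auto

lemma valid_encoding_dimB_pos:
  assumes v: "valid_encoding n e" and n: "n \<ge> 1"
  shows "dimB e \<ge> 1"
proof -
  have "density (dimB e) (omega e 0 0)"
    by (rule valid_encoding_density[OF v]) (use n valid_encoding_dimC_pos[OF v n] in auto)
  then show ?thesis by (cases "dimB e") (auto simp: density_def mtrace_def)
qed

lemma omega_trace:
  assumes "valid_encoding n e" "x < n" "c < dimC e"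
  shows "(\<Sum>b<dimB e. omega e x c $$ (b, b)) = 1"
  using valid_encoding_density[OF assms] unfolding density_def mtrace_def by auto

lemma enc_state_carrier: "enc_state e x \<in> carrier_mat (dimB e * dimC e) (dimB e * dimC e)"
  unfolding enc_state_def by (rule msum_carrier)

lemma rhoABC_carrier: "rhoABC n r e \<in> carrier_mat (n * (dimB e * dimC e)) (n * (dimB e * dimC e))"
  unfolding rhoABC_def by (rule msum_carrier)

lemma msum_kron_proj_right_index:
  assumes A: "\<And>j. j < C \<Longrightarrow> A j \<in> carrier_mat B B"
    and b: "b < B" "b' < B" and c: "c < C" "c' < C"
  shows "msum (B * C) (B * C) (\<lambda>j. s j \<cdot>\<^sub>m kron (A j) (proj C j)) {..<C} $$ (b * C + c, b' * C + c')
    = (if c = c' then s c * A c $$ (b, b') else 0)"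
proof -
  have "b * C + c < B * C" "b' * C + c' < B * C" using mult_add_less_mult b c by auto
  moreover have "(s j \<cdot>\<^sub>m kron (A j) (proj C j)) $$ (b * C + c, b' * C + c')
      = (s j * A j $$ (b, b')) * (if c = j \<and> c' = j then 1 else 0)" if "j < C" for j
    using A[OF that] that b c mult_add_less_mult[OF b(1) c(1)] mult_add_less_mult[OF b(2) c(2)]
    by (simp add: kron_index_mult_add[OF A[OF that] proj_carrier b c] kron_index(2,3))
  ultimately show ?thesis by (simp add: sum_mult_if_both_eq[OF c(1)])
qed

lemma msum_kron_proj_left_index:
  assumes A: "\<And>j. j < n \<Longrightarrow> A j \<in> carrier_mat M M"
    and x: "x < n" "x' < n" and i: "i < M" "i' < M"
  shows "msum (n * M) (n * M) (\<lambda>j. s j \<cdot>\<^sub>m kron (proj n j) (A j)) {..<n} $$ (x * M + i, x' * M + i')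
    = (if x = x' then s x * A x $$ (i, i') else 0)"
proof -
  have "x * M + i < n * M" "x' * M + i' < n * M" using mult_add_less_mult x i by auto
  moreover have "(s j \<cdot>\<^sub>m kron (proj n j) (A j)) $$ (x * M + i, x' * M + i')
      = (s j * A j $$ (i, i')) * (if x = j \<and> x' = j then 1 else 0)" if "j < n" for j
    using A[OF that] that x i mult_add_less_mult[OF x(1) i(1)] mult_add_less_mult[OF x(2) i(2)]
    by (simp add: kron_index_mult_add[OF proj_carrier A[OF that] x i] kron_index(2,3))
  ultimately show ?thesis by (simp add: sum_mult_if_both_eq[OF x(1)])
qed

lemma enc_state_index:
  assumes v: "valid_encoding n e" and x: "x < n" and b: "b < dimB e" "b' < dimB e"
    and c: "c < dimC e" "c' < dimC e"
  shows "enc_state e x $$ (b * dimC e + c, b' * dimC e + c')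
    = (if c = c' then complex_of_real (pcond e x c) * omega e x c $$ (b, b') else 0)"
  unfolding enc_state_def
  by (rule msum_kron_proj_right_index[OF valid_encoding_omega_carrier[OF v x] b c])

lemma rhoABC_index':
  assumes v: "valid_encoding n e" and x: "x < n" "x' < n" and b: "b < dimB e" "b' < dimB e"
    and c: "c < dimC e" "c' < dimC e"
  shows "rhoABC n r e $$ (x * (dimB e * dimC e) + (b * dimC e + c), x' * (dimB e * dimC e) + (b' * dimC e + c'))
    = (if x = x' \<and> c = c' then complex_of_real (r x * pcond e x c) * omega e x c $$ (b, b') else 0)"
proof -
  have "b * dimC e + c < dimB e * dimC e" "b' * dimC e + c' < dimB e * dimC e"
    using mult_add_less_mult b c by auto
  then show ?thesis
    unfolding rhoABC_def
    by (subst msum_kron_proj_left_index[OF enc_state_carrier x])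
      (use enc_state_index[OF v x(1) b c] in auto)
qed

lemma rhoABC_index:
  assumes "valid_encoding n e" "x < n" "x' < n" "b < dimB e" "b' < dimB e" "c < dimC e" "c' < dimC e"
  shows "rhoABC n r e $$ (x * (dimB e * dimC e) + b * dimC e + c, x' * (dimB e * dimC e) + b' * dimC e + c')
    = (if x = x' \<and> c = c' then complex_of_real (r x * pcond e x c) * omega e x c $$ (b, b') else 0)"
  using rhoABC_index'[OF assms] by (simp add: add.assoc)

text \<open>The distribution of the classical register \<open>C\<close>, and the block of \<open>\<rho>\<^sup>B\<^sup>C\<close> at \<open>C = c\<close>.\<close>

definition prob_C :: "nat \<Rightarrow> (nat \<Rightarrow> real) \<Rightarrow> encoding \<Rightarrow> nat \<Rightarrow> real" where
  "prob_C n r e c = (\<Sum>x<n. r x * pcond e x c)"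

definition block_BC :: "nat \<Rightarrow> (nat \<Rightarrow> real) \<Rightarrow> encoding \<Rightarrow> nat \<Rightarrow> complex mat" where
  "block_BC n r e c = mat (dimB e) (dimB e)
     (\<lambda>(b, b'). \<Sum>x<n. complex_of_real (r x * pcond e x c) * omega e x c $$ (b, b'))"

lemma block_BC_carrier: "block_BC n r e c \<in> carrier_mat (dimB e) (dimB e)"
  unfolding block_BC_def by (rule mat_carrier)

lemma weighted_trace_sum_C:
  assumes v: "valid_encoding n e" and x: "x < n"
  shows "(\<Sum>c<dimC e. \<Sum>b<dimB e. complex_of_real (r x * pcond e x c) * omega e x c $$ (b, b))
    = complex_of_real (r x)"
  using omega_trace[OF v x] valid_encoding_pcond_sum[OF v x]
  by (simp flip: sum_distrib_left of_real_sum)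

lemma weighted_trace_sum_A:
  assumes v: "valid_encoding n e" and c: "c < dimC e"
  shows "(\<Sum>x<n. \<Sum>b<dimB e. complex_of_real (r x * pcond e x c) * omega e x c $$ (b, b))
    = complex_of_real (prob_C n r e c)"
  using omega_trace[OF v _ c] by (simp add: prob_C_def flip: sum_distrib_left)

lemma psd_block_BC:
  assumes v: "valid_encoding n e" and r: "\<And>x. x < n \<Longrightarrow> r x \<ge> 0" and c: "c < dimC e"
  shows "psd (block_BC n r e c)"
  unfolding block_BC_def
  by (rule psd_lincomb)
    (use r valid_encoding_pcond_nonneg[OF v _ c] valid_encoding_density[OF v _ c] in \<open>auto simp: density_def\<close>)

lemma mtrace_block_BC:
  assumes "valid_encoding n e" "c < dimC e"
  shows "mtrace (block_BC n r e c) = complex_of_real (prob_C n r e c)"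
proof -
  have "mtrace (block_BC n r e c)
      = (\<Sum>b<dimB e. \<Sum>x<n. complex_of_real (r x * pcond e x c) * omega e x c $$ (b, b))"
    by (simp add: mtrace_def block_BC_def)
  also have "\<dots> = complex_of_real (prob_C n r e c)"
    by (subst sum.swap) (rule weighted_trace_sum_A[OF assms])
  finally show ?thesis .
qed

lemma prob_C_nonneg:
  assumes v: "valid_encoding n e" and r: "\<And>x. x < n \<Longrightarrow> r x \<ge> 0" and c: "c < dimC e"
  shows "prob_C n r e c \<ge> 0"
  unfolding prob_C_def by (rule sum_nonneg) (use r valid_encoding_pcond_nonneg[OF v _ c] in auto)

lemma prob_C_sum:
  assumes v: "valid_encoding n e"
  shows "(\<Sum>c<dimC e. prob_C n r e c) = (\<Sum>x<n. r x)"
proof -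
  have "(\<Sum>c<dimC e. prob_C n r e c) = (\<Sum>x<n. r x * (\<Sum>c<dimC e. pcond e x c))"
    unfolding prob_C_def by (simp add: sum_distrib_left) (rule sum.swap)
  then show ?thesis using valid_encoding_pcond_sum[OF v] by simp
qed

lemma S_A_eq:
  assumes v: "valid_encoding n e"
  shows "S_A n r e = - (\<Sum>x<n. eta (r x))"
proof -
  let ?B = "dimB e" let ?C = "dimC e"
  define M where "M = ptrace2 n (?B*?C) (rhoABC n r e)"
  have M: "M \<in> carrier_mat n n" unfolding M_def ptrace2_def by (rule mat_carrier)
  have ent: "M $$ (i, j) = (if i = j then complex_of_real (r i) else 0)" if i: "i < n" and j: "j < n" for i j
  proof -
    have "M $$ (i, j) = (\<Sum>k<?B*?C. rhoABC n r e $$ (i*(?B*?C) + k, j*(?B*?C) + k))"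
      unfolding M_def ptrace2_def by (simp only: index_mat(1)[OF i j] case_prod_conv)
    also have "\<dots> = (\<Sum>b<?B. \<Sum>c<?C. rhoABC n r e $$ (i*(?B*?C) + (b*?C + c), j*(?B*?C) + (b*?C + c)))"
      by (rule sum_lessThan_mult)
    also have "\<dots> = (\<Sum>b<?B. \<Sum>c<?C. if i = j then complex_of_real (r i * pcond e i c) * omega e i c $$ (b, b) else 0)"
      by (intro sum.cong refl) (simp only: rhoABC_index'[OF v i j] lessThan_iff, simp)
    also have "\<dots> = (if i = j then complex_of_real (r i) else 0)"
    proof (cases "i = j")
      case True
      then show ?thesis using weighted_trace_sum_C[OF v i, of r] by (simp add: sum.swap[of _ "{..<?B}"])
    qed simp
    finally show ?thesis .
  qed
  have "S_A n r e = vn_entropy M" unfolding S_A_def M_def ..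
  also have "\<dots> = - (\<Sum>i<n. eta (Re (M $$ (i, i))))" by (rule vn_entropy_diagonal[OF M]) (simp add: ent)
  also have "\<dots> = - (\<Sum>x<n. eta (r x))" by (simp add: ent)
  finally show ?thesis .
qed

lemma S_C_eq:
  assumes v: "valid_encoding n e"
  shows "S_C n r e = - (\<Sum>c<dimC e. eta (prob_C n r e c))"
proof -
  let ?B = "dimB e" let ?C = "dimC e"
  define M where "M = ptrace1 (n * ?B) ?C (rhoABC n r e)"
  have M: "M \<in> carrier_mat ?C ?C" unfolding M_def ptrace1_def by (rule mat_carrier)
  have ent: "M $$ (i, j) = (if i = j then complex_of_real (prob_C n r e i) else 0)" if i: "i < ?C" and j: "j < ?C" for i j
  proof -
    have "M $$ (i, j) = (\<Sum>k<n*?B. rhoABC n r e $$ (k*?C + i, k*?C + j))"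
      unfolding M_def ptrace1_def by (simp only: index_mat(1)[OF i j] case_prod_conv)
    also have "\<dots> = (\<Sum>x<n. \<Sum>b<?B. rhoABC n r e $$ ((x*?B + b)*?C + i, (x*?B + b)*?C + j))"
      by (rule sum_lessThan_mult)
    also have "\<dots> = (\<Sum>x<n. \<Sum>b<?B. rhoABC n r e $$ (x*(?B*?C) + (b*?C + i), x*(?B*?C) + (b*?C + j)))"
      by (simp add: algebra_simps)
    also have "\<dots> = (\<Sum>x<n. \<Sum>b<?B. if i = j then complex_of_real (r x * pcond e x i) * omega e x i $$ (b, b) else 0)"
      by (intro sum.cong refl) (simp only: rhoABC_index'[OF v _ _ _ _ i j] lessThan_iff, simp)
    also have "\<dots> = (if i = j then complex_of_real (prob_C n r e i) else 0)"
    proof (cases "i = j")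
      case True
      then show ?thesis using weighted_trace_sum_A[OF v i, of r] by simp
    qed simp
    finally show ?thesis .
  qed
  have "S_C n r e = vn_entropy M" unfolding S_C_def M_def ..
  also have "\<dots> = - (\<Sum>i<?C. eta (Re (M $$ (i, i))))" by (rule vn_entropy_diagonal[OF M]) (simp add: ent)
  also have "\<dots> = - (\<Sum>c<?C. eta (prob_C n r e c))" by (simp add: ent)
  finally show ?thesis .
qed

lemma S_AC_eq:
  assumes v: "valid_encoding n e"
  shows "S_AC n r e = - (\<Sum>x<n. \<Sum>c<dimC e. eta (r x * pcond e x c))"
proof -
  let ?B = "dimB e" let ?C = "dimC e"
  define M where "M = ptrace_mid n ?B ?C (rhoABC n r e)"
  have M: "M \<in> carrier_mat (n*?C) (n*?C)" unfolding M_def ptrace_mid_def by (rule mat_carrier)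
  have ent: "M $$ (i, j) = (if i = j then complex_of_real (r (i div ?C) * pcond e (i div ?C) (i mod ?C)) else 0)"
    if i: "i < n*?C" and j: "j < n*?C" for i j
  proof -
    have C: "?C > 0" using i by (cases ?C) auto
    have ii: "i div ?C < n" "i mod ?C < ?C" "j div ?C < n" "j mod ?C < ?C"
      using i j C by (auto simp: less_mult_imp_div_less)
    have eq: "(i div ?C = j div ?C \<and> i mod ?C = j mod ?C) = (i = j)" by (simp add: nat_eq_div_mod_iff[of i j ?C])
    have "M $$ (i, j) = (\<Sum>k<?B. rhoABC n r e $$ ((i div ?C)*(?B*?C) + k*?C + i mod ?C, (j div ?C)*(?B*?C) + k*?C + j mod ?C))"
      unfolding M_def ptrace_mid_def by (simp only: index_mat(1)[OF i j] case_prod_conv)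
    also have "\<dots> = (\<Sum>b<?B. if i = j then complex_of_real (r (i div ?C) * pcond e (i div ?C) (i mod ?C)) * omega e (i div ?C) (i mod ?C) $$ (b, b) else 0)"
    proof (intro sum.cong refl)
      fix b assume "b \<in> {..<?B}"
      then have b: "b < ?B" by simp
      show "rhoABC n r e $$ ((i div ?C)*(?B*?C) + b*?C + i mod ?C, (j div ?C)*(?B*?C) + b*?C + j mod ?C) =
        (if i = j then complex_of_real (r (i div ?C) * pcond e (i div ?C) (i mod ?C)) * omega e (i div ?C) (i mod ?C) $$ (b, b) else 0)"
        using rhoABC_index[OF v ii(1) ii(3) b b ii(2) ii(4), of r] eq by simp
    qed
    also have "\<dots> = (if i = j then complex_of_real (r (i div ?C) * pcond e (i div ?C) (i mod ?C)) else 0)"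
      using omega_trace[OF v ii(1) ii(2)] by (cases "i = j") (simp_all add: sum_distrib_left[symmetric])
    finally show ?thesis .
  qed
  have "S_AC n r e = vn_entropy M" unfolding S_AC_def M_def ..
  also have "\<dots> = - (\<Sum>i<n*?C. eta (Re (M $$ (i, i))))" by (rule vn_entropy_diagonal[OF M]) (simp add: ent)
  also have "\<dots> = - (\<Sum>i<n*?C. eta (r (i div ?C) * pcond e (i div ?C) (i mod ?C)))" by (simp add: ent)
  also have "\<dots> = - (\<Sum>x<n. \<Sum>c<?C. eta (r x * pcond e x c))"
    by (subst sum_lessThan_mult) (intro arg_cong[where f = uminus] sum.cong refl, simp)
  finally show ?thesis .
qed


lemma S_BC_eq:
  assumes v: "valid_encoding n e"
  shows "S_BC n r e = (\<Sum>c<dimC e. vn_entropy (block_BC n r e c))"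
proof -
  let ?B = "dimB e" let ?C = "dimC e"
  define M where "M = ptrace1 n (?B*?C) (rhoABC n r e)"
  have M: "M \<in> carrier_mat (1*(?B*?C)) (1*(?B*?C))" unfolding M_def ptrace1_def mult_1 by (rule mat_carrier)
  have "vn_entropy M = (\<Sum>a<(1::nat). \<Sum>c<?C. vn_entropy (block_BC n r e c))"
  proof (rule vn_entropy_block_diag_outer_factors[of M 1 ?B ?C "\<lambda>a c. block_BC n r e c"])
    show "M \<in> carrier_mat (1*(?B*?C)) (1*(?B*?C))" by (rule M)
    show "\<And>a c. a < 1 \<Longrightarrow> c < ?C \<Longrightarrow> block_BC n r e c \<in> carrier_mat ?B ?B" by (rule block_BC_carrier)
    fix a a' b b' c c' :: nat assume a: "a < 1" "a' < 1" and b: "b < ?B" "b' < ?B" and c: "c < ?C" "c' < ?C"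
    have I: "b*?C + c < ?B*?C" "b'*?C + c' < ?B*?C" using mult_add_less_mult b c by auto
    have "M $$ (b*?C + c, b'*?C + c') = (\<Sum>k<n. rhoABC n r e $$ (k*(?B*?C) + (b*?C + c), k*(?B*?C) + (b'*?C + c')))"
      unfolding M_def ptrace1_def by (simp only: index_mat(1)[OF I] case_prod_conv)
    also have "\<dots> = (\<Sum>k<n. if c = c' then complex_of_real (r k * pcond e k c) * omega e k c $$ (b, b') else 0)"
    proof (intro sum.cong refl)
      fix k assume "k \<in> {..<n}"
      then have k: "k < n" by simp
      show "rhoABC n r e $$ (k*(?B*?C) + (b*?C + c), k*(?B*?C) + (b'*?C + c')) =
         (if c = c' then complex_of_real (r k * pcond e k c) * omega e k c $$ (b, b') else 0)"
        using rhoABC_index'[OF v k k b c, of r] by simp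
    qed
    also have "\<dots> = (if c = c' then block_BC n r e c $$ (b, b') else 0)"
      using b by (simp add: block_BC_def)
    finally show "M $$ (a*(?B*?C) + b*?C + c, a'*(?B*?C) + b'*?C + c') = (if a = a' \<and> c = c' then block_BC n r e c $$ (b, b') else 0)"
      using a by simp
  qed
  then show ?thesis unfolding S_BC_def M_def by simp
qed

lemma S_ABC_eq:
  assumes v: "valid_encoding n e" and r: "\<And>x. x < n \<Longrightarrow> r x \<ge> 0"
  shows "S_ABC n r e
    = (\<Sum>x<n. \<Sum>c<dimC e. r x * pcond e x c * vn_entropy (omega e x c) - eta (r x * pcond e x c))"
proof -
  let ?B = "dimB e" let ?C = "dimC e"
  let ?W = "\<lambda>x c. complex_of_real (r x * pcond e x c) \<cdot>\<^sub>m omega e x c"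
  have "S_ABC n r e = (\<Sum>x<n. \<Sum>c<?C. vn_entropy (?W x c))"
    unfolding S_ABC_def
  proof (rule vn_entropy_block_diag_outer_factors[OF rhoABC_carrier])
    show "\<And>a c. a < n \<Longrightarrow> c < ?C \<Longrightarrow> ?W a c \<in> carrier_mat ?B ?B"
      using valid_encoding_omega_carrier[OF v] by auto
    fix a a' b b' c c' assume a: "a < n" "a' < n" and b: "b < ?B" "b' < ?B" and c: "c < ?C" "c' < ?C"
    have om: "omega e a c \<in> carrier_mat ?B ?B" by (rule valid_encoding_omega_carrier[OF v a(1) c(1)])
    have dm: "dim_row (omega e a c) = ?B" "dim_col (omega e a c) = ?B" using om by auto
    show "rhoABC n r e $$ (a*(?B*?C) + b*?C + c, a'*(?B*?C) + b'*?C + c') = (if a = a' \<and> c = c' then ?W a c $$ (b, b') else 0)"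
    proof (cases "a = a' \<and> c = c'")
      case True
      have w: "?W a c $$ (b, b') = complex_of_real (r a * pcond e a c) * omega e a c $$ (b, b')"
        by (rule index_smult_mat(1)) (use dm b in auto)
      show ?thesis unfolding rhoABC_index[OF v a b c, of r] if_P[OF True] w ..
    next
      case False
      show ?thesis unfolding rhoABC_index[OF v a b c, of r] if_not_P[OF False] ..
    qed
  qed
  also have "\<dots> = (\<Sum>x<n. \<Sum>c<?C. r x * pcond e x c * vn_entropy (omega e x c) - eta (r x * pcond e x c))"
  proof (intro sum.cong refl)
    fix x c assume "x \<in> {..<n}" "c \<in> {..<?C}"
    then have x: "x < n" and c: "c < ?C" by auto
    have d: "density ?B (omega e x c)" by (rule valid_encoding_density[OF v x c])
    have "vn_entropy (?W x c) = r x * pcond e x c * vn_entropy (omega e x c) - Re (mtrace (omega e x c)) * eta (r x * pcond e x c)"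
      by (rule vn_entropy_smult) (use d r[OF x] valid_encoding_pcond_nonneg[OF v x c] in \<open>auto simp: density_def\<close>)
    then show "vn_entropy (?W x c) = r x * pcond e x c * vn_entropy (omega e x c) - eta (r x * pcond e x c)"
      using d by (simp add: density_def)
  qed
  finally show ?thesis .
qed

lemma mutual_AC_eq:
  assumes v: "valid_encoding n e"
  shows "mutual_AC n r e = - (\<Sum>x<n. eta (r x)) - (\<Sum>c<dimC e. eta (prob_C n r e c))
    + (\<Sum>x<n. \<Sum>c<dimC e. eta (r x * pcond e x c))"
  unfolding mutual_AC_def S_A_eq[OF v] S_C_eq[OF v] S_AC_eq[OF v] by simp

lemma cmi_AB_C_eq:
  assumes v: "valid_encoding n e" and r: "\<And>x. x < n \<Longrightarrow> r x \<ge> 0"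
  shows "cmi_AB_C n r e = (\<Sum>c<dimC e. vn_entropy (block_BC n r e c) + eta (prob_C n r e c))
     - (\<Sum>x<n. \<Sum>c<dimC e. r x * pcond e x c * vn_entropy (omega e x c))"
proof -
  have h: "S_ABC n r e = (\<Sum>x<n. \<Sum>c<dimC e. r x * pcond e x c * vn_entropy (omega e x c) - eta (r x * pcond e x c))"
    by (rule S_ABC_eq[OF v r])
  show ?thesis
    unfolding cmi_AB_C_def S_AC_eq[OF v] S_BC_eq[OF v] h S_C_eq[OF v]
    by (simp add: sum.distrib sum_subtractf)
qed


section \<open>Mixing encodings along a classical flag\<close>

definition mix_dimB :: "nat \<Rightarrow> (nat \<Rightarrow> encoding) \<Rightarrow> nat" where
  "mix_dimB K es = Max ((\<lambda>k. dimB (es k)) ` {..<K})"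

definition mix_dimC :: "nat \<Rightarrow> (nat \<Rightarrow> encoding) \<Rightarrow> nat" where
  "mix_dimC K es = Max ((\<lambda>k. dimC (es k)) ` {..<K})"

text \<open>
  The register \<open>C\<close> of the mixture is indexed by \<open>j = k * mix_dimC K es + c\<close>: every component
  is padded to the common dimensions, and the padding slots \<open>c \<ge> dimC (es k)\<close> get probability
  \<open>0\<close> and the dummy state \<open>|0\<rangle>\<langle>0|\<close>.
\<close>
definition mix :: "nat \<Rightarrow> (nat \<Rightarrow> real) \<Rightarrow> (nat \<Rightarrow> encoding) \<Rightarrow> encoding" where
  "mix K lam es = \<lparr>dimB = mix_dimB K es, dimC = K * mix_dimC K es,
    pcond = (\<lambda>x j. if j mod mix_dimC K es < dimC (es (j div mix_dimC K es))
      then lam (j div mix_dimC K es) * pcond (es (j div mix_dimC K es)) x (j mod mix_dimC K es) else 0),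
    omega = (\<lambda>x j. if j mod mix_dimC K es < dimC (es (j div mix_dimC K es))
      then pad (mix_dimB K es) (omega (es (j div mix_dimC K es)) x (j mod mix_dimC K es))
      else proj (mix_dimB K es) 0)\<rparr>"

lemma mix_simps: "dimB (mix K lam es) = mix_dimB K es" "dimC (mix K lam es) = K * mix_dimC K es"
  by (simp_all add: mix_def)

locale encoding_mixture =
  fixes n K :: nat and r lam :: "nat \<Rightarrow> real" and es :: "nat \<Rightarrow> encoding"
  assumes n_pos: "n \<ge> 1" and K_pos: "K \<ge> 1"
    and r_nonneg: "\<And>x. x < n \<Longrightarrow> r x \<ge> 0" and r_sum: "(\<Sum>x<n. r x) = 1"
    and lam_nonneg: "\<And>k. k < K \<Longrightarrow> lam k \<ge> 0" and lam_sum: "(\<Sum>k<K. lam k) = 1"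
    and valid_es: "\<And>k. k < K \<Longrightarrow> valid_encoding n (es k)"
begin

abbreviation "Emix \<equiv> mix K lam es"
abbreviation "Bmix \<equiv> mix_dimB K es"
abbreviation "Cmix \<equiv> mix_dimC K es"

lemma dimC_le_mix: "k < K \<Longrightarrow> dimC (es k) \<le> Cmix"
  unfolding mix_dimC_def by (rule Max_ge) auto

lemma dimB_le_mix: "k < K \<Longrightarrow> dimB (es k) \<le> Bmix"
  unfolding mix_dimB_def by (rule Max_ge) auto

lemma mix_dimB_pos: "Bmix \<ge> 1"
  using dimB_le_mix[of 0] valid_encoding_dimB_pos[OF valid_es[of 0] n_pos] K_pos by simp

lemma pcond_mix:
  assumes "c < Cmix"
  shows "pcond Emix x (k * Cmix + c) = (if c < dimC (es k) then lam k * pcond (es k) x c else 0)"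
  using assms by (simp add: mix_def)

lemma omega_mix:
  assumes "c < Cmix"
  shows "omega Emix x (k * Cmix + c) = (if c < dimC (es k) then pad Bmix (omega (es k) x c) else proj Bmix 0)"
  using assms by (simp add: mix_def)

lemma sum_mix_C:
  assumes "\<And>k c. k < K \<Longrightarrow> c < Cmix \<Longrightarrow> g (k * Cmix + c) = (if c < dimC (es k) then h k c else 0)"
  shows "(\<Sum>j<dimC Emix. g j) = (\<Sum>k<K. \<Sum>c<dimC (es k). h k c)"
proof -
  have "(\<Sum>j<dimC Emix. g j) = (\<Sum>k<K. \<Sum>c<Cmix. if c < dimC (es k) then h k c else 0)"
    unfolding mix_simps sum_lessThan_mult by (intro sum.cong refl) (simp add: assms)
  also have "\<dots> = (\<Sum>k<K. \<Sum>c<dimC (es k). h k c)"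
    by (rule sum.cong[OF refl]) (simp add: sum_if_less dimC_le_mix)
  finally show ?thesis .
qed

lemma valid_encoding_mix: "valid_encoding n Emix"
  unfolding valid_encoding_def
proof (intro allI impI conjI)
  fix x j assume x: "x < n" and j: "j < dimC Emix"
  have Cmix: "Cmix > 0" using j by (cases Cmix) (auto simp: mix_simps)
  define k c where "k = j div Cmix" and "c = j mod Cmix"
  have k: "k < K" using j Cmix unfolding k_def mix_simps by (simp add: less_mult_imp_div_less mult.commute)
  have c: "c < Cmix" using Cmix unfolding c_def by simp
  have j_eq: "j = k * Cmix + c" unfolding k_def c_def by (rule div_mult_mod_eq[symmetric])
  show "pcond Emix x j \<ge> 0"
    unfolding j_eq pcond_mix[OF c]
    using lam_nonneg[OF k] valid_encoding_pcond_nonneg[OF valid_es[OF k] x] by auto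
  show "density (dimB Emix) (omega Emix x j)"
    unfolding j_eq omega_mix[OF c] mix_simps
    using density_pad[OF valid_encoding_density[OF valid_es[OF k] x] dimB_le_mix[OF k]]
      density_proj[OF mix_dimB_pos] by auto
next
  fix x assume x: "x < n"
  have "(\<Sum>j<dimC Emix. pcond Emix x j) = (\<Sum>k<K. \<Sum>c<dimC (es k). lam k * pcond (es k) x c)"
    by (rule sum_mix_C) (simp add: pcond_mix)
  also have "\<dots> = 1"
    using valid_encoding_pcond_sum[OF valid_es x] lam_sum by (simp flip: sum_distrib_left)
  finally show "(\<Sum>j<dimC Emix. pcond Emix x j) = 1" .
qed

lemma prob_C_mix:
  assumes "c < Cmix"
  shows "prob_C n r Emix (k * Cmix + c) = (if c < dimC (es k) then lam k * prob_C n r (es k) c else 0)"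
  unfolding prob_C_def pcond_mix[OF assms] by (simp add: sum_distrib_left ac_simps)

lemma block_BC_mix:
  assumes k: "k < K" and c: "c < Cmix"
  shows "block_BC n r Emix (k * Cmix + c)
    = (if c < dimC (es k) then complex_of_real (lam k) \<cdot>\<^sub>m pad Bmix (block_BC n r (es k) c) else 0\<^sub>m Bmix Bmix)"
proof (rule eq_matI)
  fix b b' assume "b < dim_row (if c < dimC (es k) then complex_of_real (lam k) \<cdot>\<^sub>m pad Bmix (block_BC n r (es k) c) else 0\<^sub>m Bmix Bmix)"
    "b' < dim_col (if c < dimC (es k) then complex_of_real (lam k) \<cdot>\<^sub>m pad Bmix (block_BC n r (es k) c) else 0\<^sub>m Bmix Bmix)"
  then have b: "b < Bmix" "b' < Bmix" by (auto simp: pad_def split: if_splits)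
  show "block_BC n r Emix (k * Cmix + c) $$ (b, b')
    = (if c < dimC (es k) then complex_of_real (lam k) \<cdot>\<^sub>m pad Bmix (block_BC n r (es k) c) else 0\<^sub>m Bmix Bmix) $$ (b, b')"
  proof (cases "c < dimC (es k)")
    case True
    let ?inB = "b < dimB (es k) \<and> b' < dimB (es k)"
    have pad_omega: "pad Bmix (omega (es k) x c) $$ (b, b') = (if ?inB then omega (es k) x c $$ (b, b') else 0)"
      if "x < n" for x
      using b valid_encoding_omega_carrier[OF valid_es[OF k] that True] by (simp add: pad_index)
    have "block_BC n r Emix (k * Cmix + c) $$ (b, b')
        = (\<Sum>x<n. complex_of_real (r x * (lam k * pcond (es k) x c)) * pad Bmix (omega (es k) x c) $$ (b, b'))"
      using b by (simp add: block_BC_def mix_simps pcond_mix[OF c] omega_mix[OF c] True)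
    also have "\<dots> = (\<Sum>x<n. complex_of_real (lam k) * (complex_of_real (r x * pcond (es k) x c)
        * (if ?inB then omega (es k) x c $$ (b, b') else 0)))"
      by (intro sum.cong refl) (simp add: pad_omega)
    also have "\<dots> = (complex_of_real (lam k) \<cdot>\<^sub>m pad Bmix (block_BC n r (es k) c)) $$ (b, b')"
      using b by (cases ?inB) (auto simp: pad_def block_BC_def sum_distrib_left ac_simps)
    finally show ?thesis using True by simp
  qed (use b in \<open>simp add: block_BC_def mix_simps pcond_mix[OF c]\<close>)
qed (auto simp: block_BC_def mix_simps pad_def)

text \<open>
  In both \<open>S(A:C)\<close> and \<open>S(A:B|C)\<close> the flag contributes the same Shannon term
  \<open>\<Sum>\<^sub>k \<eta>(\<lambda>\<^sub>k)\<close> to two entropies of opposite sign, so it cancels.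
\<close>
lemma sum_eta_prob_C_mix:
  "(\<Sum>j<dimC Emix. eta (prob_C n r Emix j))
    = (\<Sum>k<K. lam k * (\<Sum>c<dimC (es k). eta (prob_C n r (es k) c))) + (\<Sum>k<K. eta (lam k))"
proof -
  have "(\<Sum>j<dimC Emix. eta (prob_C n r Emix j))
      = (\<Sum>k<K. \<Sum>c<dimC (es k). lam k * eta (prob_C n r (es k) c) + prob_C n r (es k) c * eta (lam k))"
    by (rule sum_mix_C)
      (simp add: prob_C_mix eta_mult lam_nonneg prob_C_nonneg[OF valid_es r_nonneg])
  also have "\<dots> = (\<Sum>k<K. lam k * (\<Sum>c<dimC (es k). eta (prob_C n r (es k) c))
      + eta (lam k) * (\<Sum>c<dimC (es k). prob_C n r (es k) c))"
    by (simp add: sum.distrib sum_distrib_left sum_distrib_right ac_simps)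
  also have "\<dots> = (\<Sum>k<K. lam k * (\<Sum>c<dimC (es k). eta (prob_C n r (es k) c)) + eta (lam k))"
    by (intro sum.cong refl) (simp add: prob_C_sum[OF valid_es] r_sum)
  finally show ?thesis by (simp add: sum.distrib)
qed

lemma sum_eta_joint_AC_mix:
  "(\<Sum>x<n. \<Sum>j<dimC Emix. eta (r x * pcond Emix x j))
    = (\<Sum>k<K. lam k * (\<Sum>x<n. \<Sum>c<dimC (es k). eta (r x * pcond (es k) x c))) + (\<Sum>k<K. eta (lam k))"
proof -
  have "(\<Sum>j<dimC Emix. eta (r x * pcond Emix x j))
      = (\<Sum>k<K. \<Sum>c<dimC (es k). lam k * eta (r x * pcond (es k) x c) + r x * pcond (es k) x c * eta (lam k))"
    if x: "x < n" for x
  proof (rule sum_mix_C)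
    fix k c assume k: "k < K" and c: "c < Cmix"
    have "r x * pcond (es k) x c \<ge> 0" if "c < dimC (es k)"
      using r_nonneg[OF x] valid_encoding_pcond_nonneg[OF valid_es[OF k] x that] by simp
    then show "eta (r x * pcond Emix x (k * Cmix + c)) = (if c < dimC (es k)
        then lam k * eta (r x * pcond (es k) x c) + r x * pcond (es k) x c * eta (lam k) else 0)"
      unfolding pcond_mix[OF c] by (simp add: mult.left_commute eta_mult lam_nonneg[OF k])
  qed
  then have "(\<Sum>x<n. \<Sum>j<dimC Emix. eta (r x * pcond Emix x j))
      = (\<Sum>k<K. \<Sum>x<n. \<Sum>c<dimC (es k). lam k * eta (r x * pcond (es k) x c) + r x * pcond (es k) x c * eta (lam k))"
    by (simp add: sum.swap[of _ "{..<K}"])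
  also have "\<dots> = (\<Sum>k<K. lam k * (\<Sum>x<n. \<Sum>c<dimC (es k). eta (r x * pcond (es k) x c))
      + eta (lam k) * (\<Sum>x<n. r x * (\<Sum>c<dimC (es k). pcond (es k) x c)))"
    by (simp add: sum.distrib sum_distrib_left sum_distrib_right ac_simps)
  also have "\<dots> = (\<Sum>k<K. lam k * (\<Sum>x<n. \<Sum>c<dimC (es k). eta (r x * pcond (es k) x c)) + eta (lam k))"
    by (intro sum.cong refl) (simp add: valid_encoding_pcond_sum[OF valid_es] r_sum)
  finally show ?thesis by (simp add: sum.distrib)
qed

lemma mutual_AC_mix: "mutual_AC n r Emix = (\<Sum>k<K. lam k * mutual_AC n r (es k))"
proof -
  have "mutual_AC n r Emix = (\<Sum>k<K. lam k) * - (\<Sum>x<n. eta (r x))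
      - (\<Sum>k<K. lam k * (\<Sum>c<dimC (es k). eta (prob_C n r (es k) c)))
      + (\<Sum>k<K. lam k * (\<Sum>x<n. \<Sum>c<dimC (es k). eta (r x * pcond (es k) x c)))"
    unfolding mutual_AC_eq[OF valid_encoding_mix] sum_eta_prob_C_mix sum_eta_joint_AC_mix lam_sum
    by simp
  also have "\<dots> = (\<Sum>k<K. lam k * mutual_AC n r (es k))"
    by (simp add: mutual_AC_eq[OF valid_es] algebra_simps sum.distrib sum_subtractf sum_distrib_right)
  finally show ?thesis .
qed

text \<open>
  For \<open>S(A:B|C)\<close> the term \<open>q \<eta>(\<lambda>\<^sub>k)\<close> produced by scaling a block of \<open>\<rho>\<^sup>B\<^sup>C\<close> by \<open>\<lambda>\<^sub>k\<close> cancels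
  against the one produced by \<open>\<eta>(\<lambda>\<^sub>k q)\<close>.
\<close>
lemma sum_block_BC_entropy_mix:
  "(\<Sum>j<dimC Emix. vn_entropy (block_BC n r Emix j) + eta (prob_C n r Emix j))
    = (\<Sum>k<K. lam k * (\<Sum>c<dimC (es k). vn_entropy (block_BC n r (es k) c) + eta (prob_C n r (es k) c)))"
proof -
  have "vn_entropy (block_BC n r Emix (k * Cmix + c)) + eta (prob_C n r Emix (k * Cmix + c))
      = (if c < dimC (es k) then lam k * (vn_entropy (block_BC n r (es k) c) + eta (prob_C n r (es k) c)) else 0)"
    if k: "k < K" and c: "c < Cmix" for k c
  proof (cases "c < dimC (es k)")
    case True
    let ?W = "block_BC n r (es k) c"
    have W: "?W \<in> carrier_mat (dimB (es k)) (dimB (es k))" by (rule block_BC_carrier)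
    have q: "prob_C n r (es k) c \<ge> 0" by (rule prob_C_nonneg[OF valid_es[OF k] r_nonneg True])
    have "vn_entropy (complex_of_real (lam k) \<cdot>\<^sub>m pad Bmix ?W)
        = lam k * vn_entropy (pad Bmix ?W) - Re (mtrace (pad Bmix ?W)) * eta (lam k)"
      by (rule vn_entropy_smult[OF pad_carrier psd_pad[OF W dimB_le_mix[OF k]] lam_nonneg[OF k]])
        (rule psd_block_BC[OF valid_es[OF k] r_nonneg True])
    also have "\<dots> = lam k * vn_entropy ?W - prob_C n r (es k) c * eta (lam k)"
      by (simp add: vn_entropy_pad[OF W dimB_le_mix[OF k]] mtrace_pad[OF W dimB_le_mix[OF k]]
          mtrace_block_BC[OF valid_es[OF k] True])
    finally show ?thesis
      unfolding block_BC_mix[OF k c] prob_C_mix[OF c] using True eta_mult[OF lam_nonneg[OF k] q]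
      by (simp add: algebra_simps)
  qed (simp add: block_BC_mix[OF k c] prob_C_mix[OF c] vn_entropy_zero_mat)
  then have "(\<Sum>j<dimC Emix. vn_entropy (block_BC n r Emix j) + eta (prob_C n r Emix j))
      = (\<Sum>k<K. \<Sum>c<dimC (es k). lam k * (vn_entropy (block_BC n r (es k) c) + eta (prob_C n r (es k) c)))"
    by (rule sum_mix_C)
  then show ?thesis by (simp only: sum_distrib_left)
qed

lemma sum_omega_entropy_mix:
  "(\<Sum>x<n. \<Sum>j<dimC Emix. r x * pcond Emix x j * vn_entropy (omega Emix x j))
    = (\<Sum>k<K. lam k * (\<Sum>x<n. \<Sum>c<dimC (es k). r x * pcond (es k) x c * vn_entropy (omega (es k) x c)))"
proof -
  have "(\<Sum>j<dimC Emix. r x * pcond Emix x j * vn_entropy (omega Emix x j))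
      = (\<Sum>k<K. \<Sum>c<dimC (es k). lam k * (r x * pcond (es k) x c * vn_entropy (omega (es k) x c)))"
    if x: "x < n" for x
    by (rule sum_mix_C)
      (use vn_entropy_pad[OF valid_encoding_omega_carrier[OF valid_es x] dimB_le_mix] in
        \<open>auto simp: pcond_mix omega_mix\<close>)
  then show ?thesis
    by (simp add: sum.swap[of _ "{..<K}"] sum_distrib_left)
qed

lemma cmi_AB_C_mix: "cmi_AB_C n r Emix = (\<Sum>k<K. lam k * cmi_AB_C n r (es k))"
  by (simp add: cmi_AB_C_eq[OF valid_encoding_mix r_nonneg] cmi_AB_C_eq[OF valid_es r_nonneg]
      sum_block_BC_entropy_mix sum_omega_entropy_mix sum_subtractf right_diff_distrib)

end

section \<open>The block decoder of a mixture\<close>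

definition sub_block :: "nat \<Rightarrow> complex mat \<Rightarrow> nat \<Rightarrow> nat \<Rightarrow> complex mat" where
  "sub_block N X a a' = mat N N (\<lambda>(p, q). X $$ (a * N + p, a' * N + q))"

lemma ampliate_index:
  "i < k * m \<Longrightarrow> j < k * m \<Longrightarrow>
    ampliate k n m D X $$ (i, j) = D (sub_block n X (i div m) (j div m)) $$ (i mod m, j mod m)"
  "dim_row (ampliate k n m D X) = k * m" "dim_col (ampliate k n m D X) = k * m"
  by (simp_all add: ampliate_def sub_block_def)

definition success_prob ::
    "nat \<Rightarrow> (nat \<Rightarrow> real) \<Rightarrow> (nat \<Rightarrow> complex vec) \<Rightarrow> encoding \<Rightarrow> (complex mat \<Rightarrow> complex mat) \<Rightarrow> real" where
  "success_prob n r \<phi> e D = (\<Sum>x<n. r x * Re (qform (D (enc_state e x)) (\<phi> x)))"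

context encoding_mixture
begin

definition dimBC :: "nat \<Rightarrow> nat" where
  "dimBC k = dimB (es k) * dimC (es k)"

definition dimBC_mix :: nat where
  "dimBC_mix = Bmix * (K * Cmix)"

definition embed :: "nat \<Rightarrow> nat \<Rightarrow> nat" where
  "embed k i = (i div dimC (es k)) * (K * Cmix) + (k * Cmix + i mod dimC (es k))"

definition comp_block :: "nat \<Rightarrow> complex mat \<Rightarrow> complex mat" where
  "comp_block k X = mat (dimBC k) (dimBC k) (\<lambda>(i, j). X $$ (embed k i, embed k j))"

definition unused :: "nat set" where
  "unused = {..<dimBC_mix} - (\<Union>k<K. embed k ` {..<dimBC k})"

text \<open>
  Component \<open>k\<close> is decoded by \<open>D\<^sub>k\<close>; the weight on the padding indices is sent to \<open>|0\<rangle>\<langle>0|\<close>,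
  which keeps the map trace preserving.
\<close>
definition mix_decoder :: "nat \<Rightarrow> (nat \<Rightarrow> complex mat \<Rightarrow> complex mat) \<Rightarrow> complex mat \<Rightarrow> complex mat" where
  "mix_decoder d Ds X = msum d d (\<lambda>k. Ds k (comp_block k X)) {..<K} + (\<Sum>i\<in>unused. X $$ (i, i)) \<cdot>\<^sub>m proj d 0"

lemma dimBC_mix_eq: "dimB Emix * dimC Emix = dimBC_mix"
  unfolding dimBC_mix_def mix_simps ..

lemma embed_facts:
  assumes k: "k < K" and i: "i < dimBC k"
  shows "embed k i < dimBC_mix" "embed k i div (K * Cmix) = i div dimC (es k)"
    "embed k i mod (K * Cmix) = k * Cmix + i mod dimC (es k)"
    "(k * Cmix + i mod dimC (es k)) div Cmix = k" "(k * Cmix + i mod dimC (es k)) mod Cmix = i mod dimC (es k)"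
proof -
  have "dimC (es k) > 0" using i unfolding dimBC_def by (cases "dimC (es k)") auto
  then have c: "i mod dimC (es k) < Cmix" using dimC_le_mix[OF k] by (meson less_le_trans mod_less_divisor)
  have kc: "k * Cmix + i mod dimC (es k) < K * Cmix" by (rule mult_add_less_mult[OF k c])
  have b: "i div dimC (es k) < Bmix"
    using i dimB_le_mix[OF k] unfolding dimBC_def by (simp add: less_mult_imp_div_less less_le_trans)
  show "embed k i < dimBC_mix" unfolding embed_def dimBC_mix_def by (rule mult_add_less_mult[OF b kc])
  show "embed k i div (K * Cmix) = i div dimC (es k)" "embed k i mod (K * Cmix) = k * Cmix + i mod dimC (es k)"
    unfolding embed_def using kc by simp_all
  show "(k * Cmix + i mod dimC (es k)) div Cmix = k" "(k * Cmix + i mod dimC (es k)) mod Cmix = i mod dimC (es k)"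
    using c by simp_all
qed

lemma inj_on_embed: "k < K \<Longrightarrow> inj_on (embed k) {..<dimBC k}"
  by (rule inj_onI) (metis embed_facts(2,3,5) div_mult_mod_eq lessThan_iff)

lemma embed_disjoint:
  "k < K \<Longrightarrow> k' < K \<Longrightarrow> i < dimBC k \<Longrightarrow> j < dimBC k' \<Longrightarrow> embed k i = embed k' j \<Longrightarrow> k = k'"
  by (metis embed_facts(3,4))

lemma sum_diag_split_embed:
  "(\<Sum>k<K. \<Sum>i<dimBC k. A $$ (embed k i, embed k i)) + (\<Sum>i\<in>unused. A $$ (i, i)) = (\<Sum>i<dimBC_mix. A $$ (i, i))"
proof -
  let ?U = "\<Union>k<K. embed k ` {..<dimBC k}"
  have "(\<Sum>k<K. \<Sum>i<dimBC k. A $$ (embed k i, embed k i)) = (\<Sum>k<K. \<Sum>v\<in>embed k ` {..<dimBC k}. A $$ (v, v))"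
    by (rule sum.cong[OF refl]) (simp add: sum.reindex[OF inj_on_embed])
  also have "\<dots> = (\<Sum>v\<in>?U. A $$ (v, v))"
    by (rule sum.UNION_disjoint[symmetric]) (use embed_disjoint in auto)
  also have "\<dots> + (\<Sum>i\<in>unused. A $$ (i, i)) = (\<Sum>i\<in>?U \<union> unused. A $$ (i, i))"
    by (rule sum.union_disjoint[symmetric]) (auto simp: unused_def)
  also have "?U \<union> unused = {..<dimBC_mix}" using embed_facts(1) by (auto simp: unused_def)
  finally show ?thesis .
qed

lemma comp_block_carrier: "comp_block k X \<in> carrier_mat (dimBC k) (dimBC k)"
  unfolding comp_block_def by (rule mat_carrier)

lemma comp_block_add:
  "k < K \<Longrightarrow> A \<in> carrier_mat dimBC_mix dimBC_mix \<Longrightarrow> B \<in> carrier_mat dimBC_mix dimBC_mix \<Longrightarrow>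
    comp_block k (A + B) = comp_block k A + comp_block k B"
  by (rule eq_matI) (auto simp: comp_block_def embed_facts(1))

lemma comp_block_smult:
  "k < K \<Longrightarrow> A \<in> carrier_mat dimBC_mix dimBC_mix \<Longrightarrow> comp_block k (c \<cdot>\<^sub>m A) = c \<cdot>\<^sub>m comp_block k A"
  by (rule eq_matI) (auto simp: comp_block_def embed_facts(1))

lemma mix_decoder_carrier: "mix_decoder d Ds X \<in> carrier_mat d d"
  unfolding mix_decoder_def carrier_mat_def by simp

lemma mix_decoder_index:
  "i < d \<Longrightarrow> j < d \<Longrightarrow>
    mix_decoder d Ds X $$ (i, j) = (\<Sum>k<K. Ds k (comp_block k X) $$ (i, j)) + (\<Sum>t\<in>unused. X $$ (t, t)) * proj d 0 $$ (i, j)"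
  "dim_row (mix_decoder d Ds X) = d" "dim_col (mix_decoder d Ds X) = d"
  unfolding mix_decoder_def by simp_all

lemma mix_decoder_linear:
  assumes cp: "\<And>k. k < K \<Longrightarrow> cptp (dimBC k) d (Ds k)"
    and A: "A \<in> carrier_mat dimBC_mix dimBC_mix" and B: "B \<in> carrier_mat dimBC_mix dimBC_mix"
  shows "mix_decoder d Ds (A + B) = mix_decoder d Ds A + mix_decoder d Ds B"
    and "mix_decoder d Ds (c \<cdot>\<^sub>m A) = c \<cdot>\<^sub>m mix_decoder d Ds A"
proof -
  have Ds: "Ds k (comp_block k Y) \<in> carrier_mat d d" if "k < K" for k Y
    by (rule cptpD(1)[OF cp[OF that] comp_block_carrier])
  have add: "Ds k (comp_block k (A + B)) = Ds k (comp_block k A) + Ds k (comp_block k B)" if "k < K" for k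
    unfolding comp_block_add[OF that A B] by (rule cptpD(2)[OF cp[OF that] comp_block_carrier comp_block_carrier])
  have smult: "Ds k (comp_block k (c \<cdot>\<^sub>m A)) = c \<cdot>\<^sub>m Ds k (comp_block k A)" if "k < K" for k
    unfolding comp_block_smult[OF that A] by (rule cptpD(3)[OF cp[OF that] comp_block_carrier])
  have unused_linear: "(\<Sum>t\<in>unused. (A + B) $$ (t, t)) = (\<Sum>t\<in>unused. A $$ (t, t)) + (\<Sum>t\<in>unused. B $$ (t, t))"
    "(\<Sum>t\<in>unused. (c \<cdot>\<^sub>m A) $$ (t, t)) = c * (\<Sum>t\<in>unused. A $$ (t, t))"
    using A B by (auto simp: unused_def sum.distrib sum_distrib_left intro!: sum.cong)
  have Ds_linear: "Ds k (comp_block k (A + B)) $$ (i, j) = Ds k (comp_block k A) $$ (i, j) + Ds k (comp_block k B) $$ (i, j)"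
    "Ds k (comp_block k (c \<cdot>\<^sub>m A)) $$ (i, j) = c * Ds k (comp_block k A) $$ (i, j)"
    if "k < K" "i < d" "j < d" for k i j
    using that carrier_matD[OF Ds[OF that(1)]] by (simp_all add: add smult)
  show "mix_decoder d Ds (A + B) = mix_decoder d Ds A + mix_decoder d Ds B"
    by (rule eq_matI) (simp_all add: mix_decoder_index unused_linear Ds_linear sum.distrib distrib_right)
  show "mix_decoder d Ds (c \<cdot>\<^sub>m A) = c \<cdot>\<^sub>m mix_decoder d Ds A"
    by (rule eq_matI) (simp_all add: mix_decoder_index unused_linear Ds_linear sum_distrib_left distrib_left)
qed

lemma mtrace_mix_decoder:
  assumes d: "d \<ge> 1" and cp: "\<And>k. k < K \<Longrightarrow> cptp (dimBC k) d (Ds k)"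
    and A: "A \<in> carrier_mat dimBC_mix dimBC_mix"
  shows "mtrace (mix_decoder d Ds A) = mtrace A"
proof -
  have "mtrace (Ds k (comp_block k A)) = (\<Sum>i<dimBC k. A $$ (embed k i, embed k i))" if "k < K" for k
    using cptpD(4)[OF cp[OF that] comp_block_carrier] by (simp add: mtrace_def comp_block_def)
  moreover have "dim_row (Ds k (comp_block k A)) = d" if "k < K" for k
    using cptpD(1)[OF cp[OF that] comp_block_carrier[of k A]] by auto
  ultimately have traces: "(\<Sum>i<d. Ds k (comp_block k A) $$ (i, i)) = (\<Sum>i<dimBC k. A $$ (embed k i, embed k i))"
    if "k < K" for k
    using that by (simp add: mtrace_def)
  have "mtrace (mix_decoder d Ds A)
      = (\<Sum>i<d. (\<Sum>k<K. Ds k (comp_block k A) $$ (i, i)) + (\<Sum>t\<in>unused. A $$ (t, t)) * proj d 0 $$ (i, i))"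
    by (simp add: mtrace_def mix_decoder_index)
  also have "\<dots> = (\<Sum>k<K. \<Sum>i<d. Ds k (comp_block k A) $$ (i, i)) + (\<Sum>t\<in>unused. A $$ (t, t))"
    using d mtrace_proj[OF d]
    by (simp add: sum.distrib mtrace_def sum.swap[of _ "{..<d}" "{..<K}"] flip: sum_distrib_left)
  also have "\<dots> = mtrace A"
    using A by (simp add: traces sum_diag_split_embed) (simp add: mtrace_def)
  finally show ?thesis .
qed

text \<open>\<open>ampl_comp_block m k\<close> and \<open>ampl_unused m\<close> are \<open>id\<^sub>m \<otimes> comp_block k\<close> and \<open>id\<^sub>m\<close> tensored with the trace over \<open>unused\<close>.\<close>
definition ampl_comp_block :: "nat \<Rightarrow> nat \<Rightarrow> complex mat \<Rightarrow> complex mat" where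
  "ampl_comp_block m k X = mat (m * dimBC k) (m * dimBC k) (\<lambda>(s, t).
     X $$ ((s div dimBC k) * dimBC_mix + embed k (s mod dimBC k), (t div dimBC k) * dimBC_mix + embed k (t mod dimBC k)))"

definition ampl_unused :: "nat \<Rightarrow> complex mat \<Rightarrow> complex mat" where
  "ampl_unused m X = mat m m (\<lambda>(a, a'). \<Sum>i\<in>unused. X $$ (a * dimBC_mix + i, a' * dimBC_mix + i))"

lemma ampl_unused_carrier: "ampl_unused m X \<in> carrier_mat m m"
  unfolding ampl_unused_def by (rule mat_carrier)

lemma comp_block_sub_block:
  assumes "k < K" "a < m" "a' < m"
  shows "comp_block k (sub_block dimBC_mix X a a') = sub_block (dimBC k) (ampl_comp_block m k X) a a'"
proof (rule eq_matI)
  fix p q assume "p < dim_row (sub_block (dimBC k) (ampl_comp_block m k X) a a')"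
    "q < dim_col (sub_block (dimBC k) (ampl_comp_block m k X) a a')"
  then have pq: "p < dimBC k" "q < dimBC k" by (auto simp: sub_block_def)
  moreover have "a * dimBC k + p < m * dimBC k" "a' * dimBC k + q < m * dimBC k"
    using pq assms mult_add_less_mult by auto
  ultimately show "comp_block k (sub_block dimBC_mix X a a') $$ (p, q)
      = sub_block (dimBC k) (ampl_comp_block m k X) a a' $$ (p, q)"
    using embed_facts(1)[OF assms(1)] by (simp add: comp_block_def sub_block_def ampl_comp_block_def)
qed (auto simp: comp_block_def sub_block_def)

lemma ampliate_mix_decoder:
  "ampliate m dimBC_mix d (mix_decoder d Ds) X
    = msum (m * d) (m * d) (\<lambda>k. ampliate m (dimBC k) d (Ds k) (ampl_comp_block m k X)) {..<K}
      + kron (ampl_unused m X) (proj d 0)"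
proof (rule eq_matI)
  fix i j assume "i < dim_row (msum (m * d) (m * d) (\<lambda>k. ampliate m (dimBC k) d (Ds k) (ampl_comp_block m k X)) {..<K}
      + kron (ampl_unused m X) (proj d 0))" "j < dim_col (msum (m * d) (m * d) (\<lambda>k. ampliate m (dimBC k) d (Ds k) (ampl_comp_block m k X)) {..<K}
      + kron (ampl_unused m X) (proj d 0))"
  then have ij: "i < m * d" "j < m * d" by (auto simp: kron_index ampl_unused_def)
  then have "d > 0" by (cases d) auto
  then have blocks: "i div d < m" "j div d < m" "i mod d < d" "j mod d < d"
    using ij by (auto simp: less_mult_imp_div_less)
  have unused_trace: "(\<Sum>t\<in>unused. sub_block dimBC_mix X (i div d) (j div d) $$ (t, t))
      = ampl_unused m X $$ (i div d, j div d)"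
    using blocks by (auto simp: sub_block_def ampl_unused_def unused_def intro!: sum.cong)
  show "ampliate m dimBC_mix d (mix_decoder d Ds) X $$ (i, j)
    = (msum (m * d) (m * d) (\<lambda>k. ampliate m (dimBC k) d (Ds k) (ampl_comp_block m k X)) {..<K}
      + kron (ampl_unused m X) (proj d 0)) $$ (i, j)"
  proof -
    have "ampliate m dimBC_mix d (mix_decoder d Ds) X $$ (i, j)
        = (\<Sum>k<K. Ds k (comp_block k (sub_block dimBC_mix X (i div d) (j div d))) $$ (i mod d, j mod d))
          + (\<Sum>t\<in>unused. sub_block dimBC_mix X (i div d) (j div d) $$ (t, t)) * proj d 0 $$ (i mod d, j mod d)"
      using ij blocks by (simp add: ampliate_index mix_decoder_index)
    also have "\<dots> = (\<Sum>k<K. ampliate m (dimBC k) d (Ds k) (ampl_comp_block m k X) $$ (i, j))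
          + ampl_unused m X $$ (i div d, j div d) * proj d 0 $$ (i mod d, j mod d)"
      using ij blocks by (simp add: ampliate_index comp_block_sub_block unused_trace)
    also have "\<dots> = (msum (m * d) (m * d) (\<lambda>k. ampliate m (dimBC k) d (Ds k) (ampl_comp_block m k X)) {..<K}
        + kron (ampl_unused m X) (proj d 0)) $$ (i, j)"
      using ij by (simp add: kron_index ampl_unused_def)
    finally show ?thesis .
  qed
qed (auto simp: ampliate_index kron_index ampl_unused_def)

lemma psd_ampl_comp_block:
  assumes k: "k < K" and X: "X \<in> carrier_mat (m * dimBC_mix) (m * dimBC_mix)" "psd X"
  shows "psd (ampl_comp_block m k X)"
proof -
  define g where "g s = (s div dimBC k) * dimBC_mix + embed k (s mod dimBC k)" for s
  have g_digits: "g s < m * dimBC_mix \<and> g s div dimBC_mix = s div dimBC k \<and> g s mod dimBC_mix = embed k (s mod dimBC k)"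
    if s: "s < m * dimBC k" for s
  proof -
    have "dimBC k > 0" using s by (cases "dimBC k") auto
    then have "embed k (s mod dimBC k) < dimBC_mix" using embed_facts(1)[OF k] by simp
    moreover have "s div dimBC k < m" using s by (simp add: less_mult_imp_div_less)
    ultimately show ?thesis unfolding g_def using mult_add_less_mult by simp
  qed
  have "inj_on g {..<m * dimBC k}"
  proof (rule inj_onI)
    fix s t assume s: "s \<in> {..<m * dimBC k}" and t: "t \<in> {..<m * dimBC k}" and "g s = g t"
    then have "s div dimBC k = t div dimBC k" "embed k (s mod dimBC k) = embed k (t mod dimBC k)"
      using g_digits[of s] g_digits[of t] by auto
    moreover have "dimBC k > 0" using s by (cases "dimBC k") auto
    ultimately show "s = t" using inj_onD[OF inj_on_embed[OF k]] by (metis div_mult_mod_eq lessThan_iff mod_less_divisor)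
  qed
  then have "psd (mat (m * dimBC k) (m * dimBC k) (\<lambda>(s, t). X $$ (g s, g t)))"
    by (intro psd_compression[OF X]) (use g_digits in auto)
  then show ?thesis unfolding ampl_comp_block_def g_def .
qed

lemma psd_ampl_unused:
  assumes X: "X \<in> carrier_mat (m * dimBC_mix) (m * dimBC_mix)" "psd X"
  shows "psd (ampl_unused m X)"
proof -
  have "ampl_unused m X = msum m m (\<lambda>t. mat m m (\<lambda>(a, a'). X $$ (a * dimBC_mix + t, a' * dimBC_mix + t))) unused"
    by (rule eq_matI) (auto simp: ampl_unused_def)
  also have "psd \<dots>"
  proof (rule psd_msum)
    fix t assume "t \<in> unused"
    then have t: "t < dimBC_mix" by (simp add: unused_def)
    have "inj_on (\<lambda>a. a * dimBC_mix + t) {..<m}"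
      by (rule inj_onI) (use t in simp)
    then show "psd (mat m m (\<lambda>(a, a'). X $$ (a * dimBC_mix + t, a' * dimBC_mix + t)))
        \<and> mat m m (\<lambda>(a, a'). X $$ (a * dimBC_mix + t, a' * dimBC_mix + t)) \<in> carrier_mat m m"
      using psd_compression[OF X, of m "\<lambda>a. a * dimBC_mix + t"] t mult_add_less_mult by auto
  qed
  finally show ?thesis .
qed

lemma cptp_mix_decoder:
  assumes d: "d \<ge> 1" and cp: "\<And>k. k < K \<Longrightarrow> cptp (dimBC k) d (Ds k)"
  shows "cptp dimBC_mix d (mix_decoder d Ds)"
  unfolding cptp_def
proof (intro conjI ballI allI impI)
  fix m X assume X: "X \<in> carrier_mat (m * dimBC_mix) (m * dimBC_mix)" and "psd X"
  have ampl_psd: "psd (ampliate m (dimBC k) d (Ds k) (ampl_comp_block m k X))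
      \<and> ampliate m (dimBC k) d (Ds k) (ampl_comp_block m k X) \<in> carrier_mat (m * d) (m * d)"
    if k: "k < K" for k
  proof
    have "ampl_comp_block m k X \<in> carrier_mat (m * dimBC k) (m * dimBC k)"
      unfolding ampl_comp_block_def by (rule mat_carrier)
    then show "psd (ampliate m (dimBC k) d (Ds k) (ampl_comp_block m k X))"
      by (rule cptpD(5)[OF cp[OF k] _ psd_ampl_comp_block[OF k X \<open>psd X\<close>]])
  qed (unfold ampliate_def, rule mat_carrier)
  have "psd (msum (m * d) (m * d) (\<lambda>k. ampliate m (dimBC k) d (Ds k) (ampl_comp_block m k X)) {..<K})"
    by (rule psd_msum) (simp add: ampl_psd)
  moreover have "psd (kron (ampl_unused m X) (proj d 0))"
    by (rule psd_kron_proj[OF ampl_unused_carrier[of m X] psd_ampl_unused[OF X \<open>psd X\<close>] d])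
  moreover have "kron (ampl_unused m X) (proj d 0) \<in> carrier_mat (m * d) (m * d)"
    by (rule kron_carrier[OF ampl_unused_carrier proj_carrier])
  ultimately show "psd (ampliate m dimBC_mix d (mix_decoder d Ds) X)"
    unfolding ampliate_mix_decoder by (intro psd_add[OF msum_carrier])
next
  show "mix_decoder d Ds A \<in> carrier_mat d d" for A
    by (rule mix_decoder_carrier)
  show "mix_decoder d Ds (A + B) = mix_decoder d Ds A + mix_decoder d Ds B"
    if "A \<in> carrier_mat dimBC_mix dimBC_mix" "B \<in> carrier_mat dimBC_mix dimBC_mix" for A B
    by (rule mix_decoder_linear(1)[OF cp that])
  show "mix_decoder d Ds (c \<cdot>\<^sub>m A) = c \<cdot>\<^sub>m mix_decoder d Ds A" if "A \<in> carrier_mat dimBC_mix dimBC_mix" for A c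
    by (rule mix_decoder_linear(2)[OF cp that that])
  show "mtrace (mix_decoder d Ds A) = mtrace A" if "A \<in> carrier_mat dimBC_mix dimBC_mix" for A
    by (rule mtrace_mix_decoder[OF d cp that])
qed

lemma enc_state_mix_index:
  assumes x: "x < n" and b: "b < Bmix" "b' < Bmix" and k: "k < K" "k' < K" and c: "c < Cmix" "c' < Cmix"
  shows "enc_state Emix x $$ (b * (K * Cmix) + (k * Cmix + c), b' * (K * Cmix) + (k' * Cmix + c'))
    = (if k = k' \<and> c = c' \<and> c < dimC (es k)
       then complex_of_real (lam k * pcond (es k) x c) * pad Bmix (omega (es k) x c) $$ (b, b') else 0)"
proof -
  have j: "k * Cmix + c < K * Cmix" "k' * Cmix + c' < K * Cmix" using mult_add_less_mult k c by auto
  have j_eq: "k * Cmix + c = k' * Cmix + c' \<longleftrightarrow> k = k' \<and> c = c'"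
    using c by (metis mult_add_div mult_add_mod)
  have "enc_state Emix x $$ (b * dimC Emix + (k * Cmix + c), b' * dimC Emix + (k' * Cmix + c'))
      = (if k * Cmix + c = k' * Cmix + c'
         then complex_of_real (pcond Emix x (k * Cmix + c)) * omega Emix x (k * Cmix + c) $$ (b, b') else 0)"
    by (rule enc_state_index[OF valid_encoding_mix x]) (use b j in \<open>simp_all add: mix_simps\<close>)
  then show ?thesis unfolding j_eq mix_simps pcond_mix[OF c(1)] omega_mix[OF c(1)] by auto
qed

lemma comp_block_enc_state_mix:
  assumes k: "k < K" and x: "x < n"
  shows "comp_block k (enc_state Emix x) = complex_of_real (lam k) \<cdot>\<^sub>m enc_state (es k) x"
proof (rule eq_matI)
  let ?B = "dimB (es k)" and ?C = "dimC (es k)"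
  fix p q assume "p < dim_row (complex_of_real (lam k) \<cdot>\<^sub>m enc_state (es k) x)"
    "q < dim_col (complex_of_real (lam k) \<cdot>\<^sub>m enc_state (es k) x)"
  then have pq: "p < dimBC k" "q < dimBC k" using enc_state_carrier[of "es k" x] by (auto simp: dimBC_def)
  then have "?C > 0" unfolding dimBC_def by (cases ?C) auto
  then have c: "p mod ?C < ?C" "q mod ?C < ?C" by auto
  have b: "p div ?C < ?B" "q div ?C < ?B" using pq unfolding dimBC_def by (simp_all add: less_mult_imp_div_less)
  have mix_bounds: "p div ?C < Bmix" "q div ?C < Bmix" "p mod ?C < Cmix" "q mod ?C < Cmix"
    using b c dimB_le_mix[OF k] dimC_le_mix[OF k] by linarith+
  have "comp_block k (enc_state Emix x) $$ (p, q) = enc_state Emix x $$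
      (p div ?C * (K * Cmix) + (k * Cmix + p mod ?C), q div ?C * (K * Cmix) + (k * Cmix + q mod ?C))"
    using pq by (simp add: comp_block_def embed_def)
  also have "\<dots> = (if p mod ?C = q mod ?C then complex_of_real (lam k * pcond (es k) x (p mod ?C))
      * pad Bmix (omega (es k) x (p mod ?C)) $$ (p div ?C, q div ?C) else 0)"
    by (subst enc_state_mix_index[OF x _ _ k k]) (use c mix_bounds in auto)
  also have "\<dots> = (if p mod ?C = q mod ?C then complex_of_real (lam k * pcond (es k) x (p mod ?C))
      * omega (es k) x (p mod ?C) $$ (p div ?C, q div ?C) else 0)"
    using b c dimB_le_mix[OF k] valid_encoding_omega_carrier[OF valid_es[OF k] x c(1)]
    by (cases "p mod ?C = q mod ?C") (simp_all add: pad_index)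
  also have "\<dots> = complex_of_real (lam k) * enc_state (es k) x $$ (p div ?C * ?C + p mod ?C, q div ?C * ?C + q mod ?C)"
    unfolding enc_state_index[OF valid_es[OF k] x b c] by simp
  also have "\<dots> = (complex_of_real (lam k) \<cdot>\<^sub>m enc_state (es k) x) $$ (p, q)"
    using pq enc_state_carrier[of "es k" x] by (simp add: dimBC_def)
  finally show "comp_block k (enc_state Emix x) $$ (p, q) = (complex_of_real (lam k) \<cdot>\<^sub>m enc_state (es k) x) $$ (p, q)" .
qed (use enc_state_carrier[of "es k" x] in \<open>simp_all add: comp_block_def dimBC_def\<close>)

lemma enc_state_mix_unused:
  assumes x: "x < n" and t: "t \<in> unused"
  shows "enc_state Emix x $$ (t, t) = 0"
proof -
  have t_less: "t < dimBC_mix" using t by (simp add: unused_def)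
  then have "Cmix > 0" unfolding dimBC_mix_def by (cases Cmix) auto
  define b k c where "b = t div (K * Cmix)" and "k = t mod (K * Cmix) div Cmix" and "c = t mod (K * Cmix) mod Cmix"
  have b: "b < Bmix" using t_less unfolding b_def dimBC_mix_def by (simp add: less_mult_imp_div_less)
  have "t mod (K * Cmix) < K * Cmix" using \<open>Cmix > 0\<close> K_pos by simp
  then have k: "k < K" unfolding k_def by (simp add: less_mult_imp_div_less)
  have c: "c < Cmix" using \<open>Cmix > 0\<close> unfolding c_def by simp
  have t_eq: "t = b * (K * Cmix) + (k * Cmix + c)"
    unfolding b_def k_def c_def using div_mult_mod_eq[of t "K * Cmix"] div_mult_mod_eq[of "t mod (K * Cmix)" Cmix]
    by linarith
  have "\<not> (b < dimB (es k) \<and> c < dimC (es k))"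
  proof
    assume bc: "b < dimB (es k) \<and> c < dimC (es k)"
    then have "b * dimC (es k) + c < dimBC k" unfolding dimBC_def using mult_add_less_mult by blast
    moreover have "embed k (b * dimC (es k) + c) = t" unfolding embed_def t_eq using bc by simp
    ultimately show False using t k by (auto simp: unused_def)
  qed
  then show ?thesis
  proof (cases "c < dimC (es k)")
    case True
    then show ?thesis
      unfolding t_eq using enc_state_mix_index[OF x b b k k c c] \<open>\<not> (b < dimB (es k) \<and> c < dimC (es k))\<close> b
        valid_encoding_omega_carrier[OF valid_es[OF k] x True]
      by (simp add: pad_index)
  qed (simp add: t_eq enc_state_mix_index[OF x b b k k c c])
qed

lemma mix_decoder_enc_state:
  assumes cp: "\<And>k. k < K \<Longrightarrow> cptp (dimBC k) d (Ds k)" and x: "x < n"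
  shows "mix_decoder d Ds (enc_state Emix x) = msum d d (\<lambda>k. complex_of_real (lam k) \<cdot>\<^sub>m Ds k (enc_state (es k) x)) {..<K}"
proof -
  have "Ds k (comp_block k (enc_state Emix x)) = complex_of_real (lam k) \<cdot>\<^sub>m Ds k (enc_state (es k) x)" if k: "k < K" for k
    unfolding comp_block_enc_state_mix[OF k x] using cptpD(3)[OF cp[OF k]] enc_state_carrier
    by (simp add: dimBC_def)
  moreover have "(\<Sum>t\<in>unused. enc_state Emix x $$ (t, t)) = 0"
    using enc_state_mix_unused[OF x] by simp
  ultimately show ?thesis by (intro eq_matI) (simp_all add: mix_decoder_index)
qed

lemma success_prob_mix:
  assumes cp: "\<And>k. k < K \<Longrightarrow> cptp (dimBC k) d (Ds k)" and \<phi>: "\<And>x. x < n \<Longrightarrow> \<phi> x \<in> carrier_vec d"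
  shows "success_prob n r \<phi> Emix (mix_decoder d Ds) = (\<Sum>k<K. lam k * success_prob n r \<phi> (es k) (Ds k))"
proof -
  have "Re (qform (mix_decoder d Ds (enc_state Emix x)) (\<phi> x))
      = (\<Sum>k<K. lam k * Re (qform (Ds k (enc_state (es k) x)) (\<phi> x)))" if x: "x < n" for x
  proof -
    have "Ds k (enc_state (es k) x) \<in> carrier_mat d d" if "k < K" for k
      using cptpD(1)[OF cp[OF that]] enc_state_carrier by (simp add: dimBC_def)
    then show ?thesis
      by (simp add: mix_decoder_enc_state[OF cp x] qform_msum[OF \<phi>[OF x]] qform_smult[OF _ \<phi>[OF x]] Re_sum)
  qed
  then have "success_prob n r \<phi> Emix (mix_decoder d Ds)
      = (\<Sum>x<n. \<Sum>k<K. lam k * (r x * Re (qform (Ds k (enc_state (es k) x)) (\<phi> x))))"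
    unfolding success_prob_def by (intro sum.cong refl) (simp add: sum_distrib_left mult.left_commute)
  also have "\<dots> = (\<Sum>k<K. lam k * success_prob n r \<phi> (es k) (Ds k))"
    unfolding success_prob_def by (subst sum.swap) (simp add: sum_distrib_left)
  finally show ?thesis .
qed

end

section \<open>Monotonicity and convexity of \<open>M\<^sub>\<epsilon>\<close>\<close>

lemma ensembleD:
  assumes "ensemble d n r \<phi>"
  shows "n \<ge> 1" "d \<ge> 1" "\<And>x. x < n \<Longrightarrow> r x \<ge> 0" "(\<Sum>x<n. r x) = 1"
    "\<And>x. x < n \<Longrightarrow> \<phi> x \<in> carrier_vec d"
proof -
  show n: "n \<ge> 1" using assms unfolding ensemble_def by (cases n) auto
  show "\<And>x. x < n \<Longrightarrow> r x \<ge> 0" "(\<Sum>x<n. r x) = 1" "\<And>x. x < n \<Longrightarrow> \<phi> x \<in> carrier_vec d"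
    using assms unfolding ensemble_def by auto
  have "(\<Sum>i<d. (cmod (\<phi> 0 $ i))\<^sup>2) = 1" using assms n unfolding ensemble_def by auto
  then show "d \<ge> 1" by (cases d) auto
qed

lemma mem_T_eps_iff:
  "e \<in> T_eps d n r \<phi> \<epsilon> R \<longleftrightarrow> valid_encoding n e \<and> mutual_AC n r e \<le> R \<and>
    (\<exists>D. cptp (dimB e * dimC e) d D \<and> success_prob n r \<phi> e D \<ge> 1 - \<epsilon>)"
  by (simp add: T_eps_def success_prob_def)

lemma M_eps_antimono: "R1 \<le> R2 \<Longrightarrow> M_eps d n r \<phi> \<epsilon> R2 \<le> M_eps d n r \<phi> \<epsilon> R1"
  unfolding M_eps_def by (rule INF_superset_mono) (auto simp: mem_T_eps_iff)

lemma mix_mem_T_eps: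
  assumes ens: "ensemble d n r \<phi>"
    and lam: "\<And>k. k < K \<Longrightarrow> lam k \<ge> 0" "(\<Sum>k<K. lam k) = 1"
    and es: "\<And>k. k < K \<Longrightarrow> es k \<in> T_eps d n r \<phi> (eps k) (Rs k)"
  shows "mix K lam es \<in> T_eps d n r \<phi> (\<Sum>k<K. lam k * eps k) (\<Sum>k<K. lam k * Rs k)"
proof -
  have "K \<ge> 1" using lam(2) by (cases K) auto
  then interpret encoding_mixture n K r lam es
    by unfold_locales (use ensembleD[OF ens] lam es in \<open>auto simp: mem_T_eps_iff\<close>)
  obtain Ds where Ds: "\<And>k. k < K \<Longrightarrow> cptp (dimBC k) d (Ds k) \<and> success_prob n r \<phi> (es k) (Ds k) \<ge> 1 - eps k"
    using es unfolding mem_T_eps_iff dimBC_def by metis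
  have cp: "\<And>k. k < K \<Longrightarrow> cptp (dimBC k) d (Ds k)" using Ds by blast
  have "mutual_AC n r Emix \<le> (\<Sum>k<K. lam k * Rs k)"
    unfolding mutual_AC_mix using es lam(1) by (intro sum_mono mult_left_mono) (auto simp: mem_T_eps_iff)
  moreover have "success_prob n r \<phi> Emix (mix_decoder d Ds) \<ge> 1 - (\<Sum>k<K. lam k * eps k)"
  proof -
    have "1 - (\<Sum>k<K. lam k * eps k) = (\<Sum>k<K. lam k * (1 - eps k))"
      using lam(2) by (simp add: right_diff_distrib sum_subtractf)
    also have "\<dots> \<le> (\<Sum>k<K. lam k * success_prob n r \<phi> (es k) (Ds k))"
      using Ds lam(1) by (intro sum_mono mult_left_mono) auto
    also have "\<dots> = success_prob n r \<phi> Emix (mix_decoder d Ds)"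
      by (rule success_prob_mix[OF cp ensembleD(5)[OF ens], symmetric])
    finally show ?thesis .
  qed
  moreover have "cptp (dimB Emix * dimC Emix) d (mix_decoder d Ds)"
    unfolding dimBC_mix_eq by (rule cptp_mix_decoder[OF ensembleD(2)[OF ens] cp])
  ultimately show ?thesis
    unfolding mem_T_eps_iff using valid_encoding_mix by blast
qed

lemma ereal_MInf_if_below_weighted_upper_bounds:
  fixes L :: ereal and M :: "nat \<Rightarrow> ereal"
  assumes k0: "k0 < K" "lam k0 > 0" "M k0 = -\<infinity>"
    and not_top: "\<And>k. k < K \<Longrightarrow> lam k > 0 \<Longrightarrow> M k \<noteq> \<infinity>"
    and bound: "\<And>t. (\<And>k. k < K \<Longrightarrow> lam k > 0 \<Longrightarrow> M k < ereal (t k)) \<Longrightarrow> L \<le> ereal (\<Sum>k<K. lam k * t k)"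
  shows "L = -\<infinity>"
proof (rule ereal_bot)
  fix B
  define t where "t k = real_of_ereal (M k) + 1" for k
  define s where "s = (B - (\<Sum>k<K. lam k * t k)) / lam k0"
  have "L \<le> ereal (\<Sum>k<K. lam k * (t k + (if k = k0 then s else 0)))"
  proof (rule bound)
    fix k assume "k < K" "lam k > 0"
    then show "M k < ereal (t k + (if k = k0 then s else 0))"
      using not_top[of k] k0 by (cases "M k") (auto simp: t_def)
  qed
  also have "(\<Sum>k<K. lam k * (t k + (if k = k0 then s else 0))) = (\<Sum>k<K. lam k * t k) + lam k0 * s"
    using k0(1) by (simp add: distrib_left sum.distrib if_distrib[of "\<lambda>x. lam _ * x"] cong: if_cong)
  also have "\<dots> = B" using k0(2) by (simp add: s_def)
  finally show "L \<le> ereal B" .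
qed

lemma ereal_le_convex_comb_of_upper_bounds:
  fixes L :: ereal and M :: "nat \<Rightarrow> ereal"
  assumes lam: "\<And>k. k < K \<Longrightarrow> lam k \<ge> 0" "(\<Sum>k<K. lam k) = 1"
    and bound: "\<And>t. (\<And>k. k < K \<Longrightarrow> lam k > 0 \<Longrightarrow> M k < ereal (t k)) \<Longrightarrow> L \<le> ereal (\<Sum>k<K. lam k * t k)"
  shows "L \<le> (\<Sum>k<K. ereal (lam k) * M k)"
proof (cases "\<exists>k<K. lam k > 0 \<and> M k = \<infinity>")
  case True
  then have "(\<Sum>k<K. ereal (lam k) * M k) = \<infinity>" by (subst sum_Pinfty) auto
  then show ?thesis by simp
next
  case not_top: False
  show ?thesis
  proof (cases "\<exists>k<K. lam k > 0 \<and> M k = -\<infinity>")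
    case True
    then obtain k0 where "k0 < K" "lam k0 > 0" "M k0 = -\<infinity>" by blast
    then have "L = -\<infinity>"
      by (rule ereal_MInf_if_below_weighted_upper_bounds) (use not_top bound in auto)
    then show ?thesis by simp
  next
    case False
    define m where "m k = real_of_ereal (M k)" for k
    have finite: "M k = ereal (m k)" if "k < K" "lam k > 0" for k
      using that not_top False by (cases "M k") (auto simp: m_def)
    have "ereal (lam k) * M k = ereal (lam k * m k)" if "k < K" for k
      using finite[OF that] lam(1)[OF that] by (cases "lam k > 0") (auto simp: zero_ereal_def[symmetric])
    then have sum_eq: "(\<Sum>k<K. ereal (lam k) * M k) = ereal (\<Sum>k<K. lam k * m k)"
      by simp
    have "L \<le> ereal (\<Sum>k<K. lam k * m k) + ereal e" if e: "e > 0" for e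
    proof -
      have "L \<le> ereal (\<Sum>k<K. lam k * (m k + e))"
        by (rule bound) (use finite e in simp)
      also have "(\<Sum>k<K. lam k * (m k + e)) = (\<Sum>k<K. lam k * m k) + e"
        using lam(2) by (simp add: distrib_left sum.distrib flip: sum_distrib_right)
      finally show ?thesis by simp
    qed
    then show ?thesis unfolding sum_eq by (rule ereal_le_epsilon2)
  qed
qed

text \<open>
  Weights \<open>\<lambda>\<^sub>k = 0\<close> impose nothing on the \<open>k\<close>-th encoding, but the mixture needs one; there we
  reuse the encoding chosen for an index \<open>k\<^sub>0\<close> with \<open>\<lambda>\<^sub>k\<^sub>0 > 0\<close>.
\<close>
lemma M_eps_convex:
  fixes K :: nat
  assumes ens: "ensemble d n r \<phi>"
    and lam: "\<And>k. k < K \<Longrightarrow> lam k \<ge> 0" "(\<Sum>k<K. lam k) = 1"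
  shows "M_eps d n r \<phi> (\<Sum>k<K. lam k * eps k) (\<Sum>k<K. lam k * Rs k)
    \<le> (\<Sum>k<K. ereal (lam k) * M_eps d n r \<phi> (eps k) (Rs k))"
proof (rule ereal_le_convex_comb_of_upper_bounds[OF lam])
  fix t assume t: "\<And>k. k < K \<Longrightarrow> lam k > 0 \<Longrightarrow> M_eps d n r \<phi> (eps k) (Rs k) < ereal (t k)"
  obtain k0 where k0: "k0 < K" "lam k0 > 0"
    using lam by (metis (no_types, lifting) less_le sum.neutral lessThan_iff zero_neq_one)
  have "\<exists>e\<in>T_eps d n r \<phi> (eps k) (Rs k). cmi_AB_C n r e < t k" if "k < K" "lam k > 0" for k
    using t[OF that] unfolding M_eps_def by (simp add: INF_less_iff)
  then obtain ec where ec: "\<And>k. k < K \<Longrightarrow> lam k > 0 \<Longrightarrow>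
      ec k \<in> T_eps d n r \<phi> (eps k) (Rs k) \<and> cmi_AB_C n r (ec k) < t k"
    by metis
  define idx where "idx k = (if lam k > 0 then k else k0)" for k
  define es where "es k = ec (idx k)" for k
  have weighted_idx: "(\<Sum>k<K. lam k * f (idx k)) = (\<Sum>k<K. lam k * f k)" for f :: "nat \<Rightarrow> real"
    using lam(1) by (intro sum.cong refl) (force simp: idx_def)
  have "es k \<in> T_eps d n r \<phi> (eps (idx k)) (Rs (idx k))" if "k < K" for k
    using ec k0 that by (simp add: es_def idx_def)
  then have "mix K lam es \<in> T_eps d n r \<phi> (\<Sum>k<K. lam k * eps k) (\<Sum>k<K. lam k * Rs k)"
    using mix_mem_T_eps[OF ens lam, of es "\<lambda>k. eps (idx k)" "\<lambda>k. Rs (idx k)"] by (simp add: weighted_idx)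
  then have "M_eps d n r \<phi> (\<Sum>k<K. lam k * eps k) (\<Sum>k<K. lam k * Rs k) \<le> ereal (cmi_AB_C n r (mix K lam es))"
    unfolding M_eps_def by (rule INF_lower)
  also have "cmi_AB_C n r (mix K lam es) = (\<Sum>k<K. lam k * cmi_AB_C n r (es k))"
  proof -
    have "K \<ge> 1" using k0 by simp
    then interpret encoding_mixture n K r lam es
      by unfold_locales (use ensembleD[OF ens] lam \<open>\<And>k. k < K \<Longrightarrow> es k \<in> _\<close> in \<open>auto simp: mem_T_eps_iff\<close>)
    show ?thesis by (rule cmi_AB_C_mix)
  qed
  also have "\<dots> \<le> (\<Sum>k<K. lam k * t k)"
    using ec lam(1) by (intro sum_mono) (auto simp: es_def idx_def less_le intro: mult_left_mono)
  finally show "M_eps d n r \<phi> (\<Sum>k<K. lam k * eps k) (\<Sum>k<K. lam k * Rs k) \<le> ereal (\<Sum>k<K. lam k * t k)"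
    by simp
qed

theorem lemma3p1:
  fixes d n :: nat and r :: "nat \<Rightarrow> real" and \<phi> :: "nat \<Rightarrow> complex vec"
  assumes "ensemble d n r \<phi>"
  shows "(\<forall>\<epsilon> R1 R2. R1 \<le> R2 \<longrightarrow> M_eps d n r \<phi> \<epsilon> R2 \<le> M_eps d n r \<phi> \<epsilon> R1) \<and>
         (\<forall>(K::nat) (lam::nat \<Rightarrow> real) (eps::nat \<Rightarrow> real) (Rs::nat \<Rightarrow> real).
            (\<forall>k<K. eps k > 0 \<and> Rs k \<ge> 0 \<and> lam k \<ge> 0) \<and> (\<Sum>k<K. lam k) = 1 \<longrightarrow>
            M_eps d n r \<phi> (\<Sum>k<K. lam k * eps k) (\<Sum>k<K. lam k * Rs k)
              \<le> (\<Sum>k<K. ereal (lam k) * M_eps d n r \<phi> (eps k) (Rs k)))"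
  using M_eps_antimono M_eps_convex[OF assms] by blast

end
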